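(* Let $\Omega$ be a set, $n\ge1$, and let $H_1,\ldots,H_n,G$ be subgroups of $\mathrm{Sym}(\Omega)$ such that $(H_1,\ldots,H_n)$ is confined by $G$. Let $P$ be a confining subset for $(H_1,\ldots,H_n,G)$, let $r=|P|$, and assume that $\{\Omega_\sigma\}_{\sigma\in P}$ is a displacement configuration for $P$ such that for every $\sigma\in P$ the group $\mathrm{Rist}_G(\Omega_\sigma)$ is non-trivial and $\mathrm{FC}_{\leqslant nr}(\mathrm{Rist}_G(\Omega_\sigma))=\{1\}$. Then for every $\sigma\in P$ and $k\le n$ such that $D_{\sigma,k}$ has index at most $nr$ in $R$, there exists $\rho\in M_\sigma$ such that $H_k$ contains a non-trivial subgroup $N\le\mathrm{Rist}_G(\Omega_\rho)$ that is normalized by $D_{\sigma,k}$. Moreover, if $\mathrm{Rist}_G(\Omega_\rho)$ is finitely generated for all $\rho\in M_\sigma$, then one can find a finitely generated subgroup $L$ of $H_k$ that contains $N$.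
   Context: $\mathrm{Sym}(\Omega)$ is the group of permutations of $\Omega$. The $n$-tuple $(H_1,\ldots,H_n)$ is confined by $G$ if there is a finite set $P$ of non-trivial elements of $\mathrm{Sym}(\Omega)$ such that for every $g\in G$ there is $j$ with $gH_jg^{-1}\cap P\ne\varnothing$; $P$ is then a confining subset for $(H_1,\ldots,H_n,G)$. For $\Sigma\subset\Omega$, $\mathrm{Rist}_G(\Sigma)$ is the set of elements of $G$ fixing $\Omega\setminus\Sigma$ pointwise. $\mathrm{FC}_{\leqslant m}(K)$ denotes the set of elements of $K$ whose conjugacy class has at most $m$ elements. A collection $\{\Omega_\sigma\}_{\sigma\in P}$ of non-empty subsets of $\Omega$ is a displacement configuration for $P$ if: (C1) for all $\sigma,\rho\in P$, $\Omega_\sigma=\Omega_\rho$ or $\Omega_\sigma\cap\Omega_\rho=\varnothing$; (C3) for all $\sigma,\rho\in P$, either $\sigma$ fixes $\Omega_\rho$ pointwise or $\sigma(\Omega_\rho)\cap\bigcup_{\alpha\in P}\Omega_\alpha=\varnothing$; (C4) for all $\sigma\in P$, $\sigma(\Omega_\sigma)$ is disjoint from $\bigcup_{\alpha\in P}\Omega_\alpha$ and from $\bigcup_{\alpha\in P}\sigma^{-1}(\Omega_\alpha)$. Notation: $R$ is the subgroup of $G$ generated by the groups $\mathrm{Rist}_G(\Omega_\sigma)$, $\sigma\in P$. For $\sigma\in P$ and $k\le n$, $Y_{\sigma,k}=\{\gamma\in R:\gamma\sigma\gamma^{-1}\in H_k\}$ and $D_{\sigma,k}=\langle\gamma\delta^{-1}:\gamma,\delta\in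 Y_{\sigma,k}\rangle$. For $\sigma\in P$, $M_\sigma$ is the set of $\rho\in P$ such that $\sigma(\Omega_\rho)$ is disjoint from $\Omega_\alpha$ for all $\alpha\in P$. *)

theory Defs
  imports "HOL-Algebra.Algebra"
begin

text \<open>Sym(Omega): the group of all permutations of the type 'a (Omega = UNIV).\<close>
abbreviation Sym :: "('a \<Rightarrow> 'a) monoid" where
  "Sym \<equiv> BijGroup (UNIV :: 'a set)"

definition conjg :: "('a \<Rightarrow> 'a) \<Rightarrow> ('a \<Rightarrow> 'a) set \<Rightarrow> ('a \<Rightarrow> 'a) set" where
  "conjg g H = {g \<otimes>\<^bsub>Sym\<^esub> h \<otimes>\<^bsub>Sym\<^esub> inv\<^bsub>Sym\<^esub> g | h. h \<in> H}"

definition confining_subset ::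
  "nat \<Rightarrow> (nat \<Rightarrow> ('a \<Rightarrow> 'a) set) \<Rightarrow> ('a \<Rightarrow> 'a) set \<Rightarrow> ('a \<Rightarrow> 'a) set \<Rightarrow> bool" where
  "confining_subset n H G P \<longleftrightarrow>
     finite P \<and> P \<subseteq> carrier Sym \<and> \<one>\<^bsub>Sym\<^esub> \<notin> P \<and>
     (\<forall>g \<in> G. \<exists>j \<in> {1..n}. conjg g (H j) \<inter> P \<noteq> {})"

definition confined_by ::
  "nat \<Rightarrow> (nat \<Rightarrow> ('a \<Rightarrow> 'a) set) \<Rightarrow> ('a \<Rightarrow> 'a) set \<Rightarrow> bool" where
  "confined_by n H G \<longleftrightarrow> (\<exists>P. confining_subset n H G P)"

definition Rist :: "('a \<Rightarrow> 'a) set \<Rightarrow> 'a set \<Rightarrow> ('a \<Rightarrow> 'a) set" where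
  "Rist G \<Sigma> = {g \<in> G. \<forall>x. x \<notin> \<Sigma> \<longrightarrow> g x = x}"

definition conj_class :: "('a \<Rightarrow> 'a) set \<Rightarrow> ('a \<Rightarrow> 'a) \<Rightarrow> ('a \<Rightarrow> 'a) set" where
  "conj_class K x = {k \<otimes>\<^bsub>Sym\<^esub> x \<otimes>\<^bsub>Sym\<^esub> inv\<^bsub>Sym\<^esub> k | k. k \<in> K}"

definition FC_le :: "nat \<Rightarrow> ('a \<Rightarrow> 'a) set \<Rightarrow> ('a \<Rightarrow> 'a) set" where
  "FC_le m K = {x \<in> K. finite (conj_class K x) \<and> card (conj_class K x) \<le> m}"

text \<open>Displacement configuration (conditions C1, C3, C4) for P.\<close>
definition displacement_configuration ::
  "('a \<Rightarrow> 'a) set \<Rightarrow> (('a \<Rightarrow> 'a) \<Rightarrow> 'a set) \<Rightarrow> bool" where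
  "displacement_configuration P Om \<longleftrightarrow>
     (\<forall>\<sigma> \<in> P. Om \<sigma> \<noteq> {}) \<and>
     (\<forall>\<sigma> \<in> P. \<forall>\<rho> \<in> P. Om \<sigma> = Om \<rho> \<or> Om \<sigma> \<inter> Om \<rho> = {}) \<and>
     (\<forall>\<sigma> \<in> P. \<forall>\<rho> \<in> P. (\<forall>x \<in> Om \<rho>. \<sigma> x = x) \<or>
                         \<sigma> ` Om \<rho> \<inter> (\<Union>\<alpha> \<in> P. Om \<alpha>) = {}) \<and>
     (\<forall>\<sigma> \<in> P. \<sigma> ` Om \<sigma> \<inter> (\<Union>\<alpha> \<in> P. Om \<alpha>) = {} \<and>
               \<sigma> ` Om \<sigma> \<inter> (\<Union>\<alpha> \<in> P. (inv\<^bsub>Sym\<^esub> \<sigma>) ` Om \<alpha>) = {})"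

definition Rgrp :: "('a \<Rightarrow> 'a) set \<Rightarrow> ('a \<Rightarrow> 'a) set \<Rightarrow> (('a \<Rightarrow> 'a) \<Rightarrow> 'a set) \<Rightarrow> ('a \<Rightarrow> 'a) set" where
  "Rgrp G P Om = generate Sym (\<Union>\<sigma> \<in> P. Rist G (Om \<sigma>))"

definition Yset :: "('a \<Rightarrow> 'a) set \<Rightarrow> ('a \<Rightarrow> 'a) \<Rightarrow> ('a \<Rightarrow> 'a) set \<Rightarrow> ('a \<Rightarrow> 'a) set" where
  "Yset R \<sigma> Hk = {\<gamma> \<in> R. \<gamma> \<otimes>\<^bsub>Sym\<^esub> \<sigma> \<otimes>\<^bsub>Sym\<^esub> inv\<^bsub>Sym\<^esub> \<gamma> \<in> Hk}"

definition Dgrp :: "('a \<Rightarrow> 'a) set \<Rightarrow> ('a \<Rightarrow> 'a) \<Rightarrow> ('a \<Rightarrow> 'a) set \<Rightarrow> ('a \<Rightarrow> 'a) set" where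
  "Dgrp R \<sigma> Hk = generate Sym {\<gamma> \<otimes>\<^bsub>Sym\<^esub> inv\<^bsub>Sym\<^esub> \<delta> | \<gamma> \<delta>. \<gamma> \<in> Yset R \<sigma> Hk \<and> \<delta> \<in> Yset R \<sigma> Hk}"

definition Mset :: "('a \<Rightarrow> 'a) set \<Rightarrow> (('a \<Rightarrow> 'a) \<Rightarrow> 'a set) \<Rightarrow> ('a \<Rightarrow> 'a) \<Rightarrow> ('a \<Rightarrow> 'a) set" where
  "Mset P Om \<sigma> = {\<rho> \<in> P. \<forall>\<alpha> \<in> P. \<sigma> ` Om \<rho> \<inter> Om \<alpha> = {}}"

definition index_le :: "('a \<Rightarrow> 'a) set \<Rightarrow> ('a \<Rightarrow> 'a) set \<Rightarrow> nat \<Rightarrow> bool" where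
  "index_le D R m \<longleftrightarrow> finite {D #>\<^bsub>Sym\<^esub> g | g. g \<in> R} \<and> card {D #>\<^bsub>Sym\<^esub> g | g. g \<in> R} \<le> m"

definition normalizes :: "('a \<Rightarrow> 'a) set \<Rightarrow> ('a \<Rightarrow> 'a) set \<Rightarrow> bool" where
  "normalizes D N \<longleftrightarrow> (\<forall>d \<in> D. conjg d N = N)"

definition fin_gen :: "('a \<Rightarrow> 'a) set \<Rightarrow> bool" where
  "fin_gen L \<longleftrightarrow> (\<exists>F. finite F \<and> F \<subseteq> carrier Sym \<and> generate Sym F = L)"

end

theory Submission
  imports Defs
begin

(*
  For \<gamma> \<in> Y the permutation \<gamma>\<sigma>\<gamma>\<^sup>-\<^sup>1 lies in H_k, hence so does every quotient
  (\<gamma>\<sigma>\<gamma>\<^sup>-\<^sup>1)\<^sup>-\<^sup>1(\<delta>\<sigma>\<delta>\<^sup>-\<^sup>1) = \<gamma>\<sigma>\<^sup>-\<^sup>1a\<sigma>\<delta>\<^sup>-\<^sup>1 with a = \<gamma>\<^sup>-\<^sup>1\<delta> \<in> R.  Let U_M be the union of the \<Omega>_\<rho>, \<rho> \<in> M_\<sigma>.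
  Since \<sigma> fixes the rest of the support of R pointwise, only the part of a on U_M survives
  conjugation by \<sigma>, and it is moved to \<sigma>\<^sup>-\<^sup>1(U_M), which meets no \<Omega>_\<alpha>.  Consequently every element of
  D = D_\<sigma>,k agrees on U_M with an element of H_k.

  Because D has index at most nr in R while FC_\<le>nr(Rist_G(\<Omega>_\<tau>)) is trivial, no non-trivial
  element of Rist_G(\<Omega>_\<tau>) is centralised by D \<inter> Rist_G(\<Omega>_\<tau>).  Taking the commutator of two lifted
  elements of H_k, the parts living outside U_M cancel, and one obtains z \<noteq> 1 in
  H_k \<inter> Rist_G(\<Omega>_\<tau>) for some \<tau> \<in> M_\<sigma>.  N is the subgroup generated by the D-conjugates of z; it lies in
  H_k because D acts on U_M like elements of H_k.  If Rist_G(\<Omega>_\<tau>) is finitely generated, the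
  restrictions of D to \<Omega>_\<tau> form a subgroup of finite index in it, hence are finitely generated
  (Schreier); lifting these generators to H_k and adding z gives L.
*)

section \<open>Conjugacy classes, cosets and Schreier's lemma\<close>

lemma card_image_le_if_coarser:
  assumes fin: "finite (f ` A)"
    and coarser: "\<And>x y. x \<in> A \<Longrightarrow> y \<in> A \<Longrightarrow> f x = f y \<Longrightarrow> g x = g y"
  shows "finite (g ` A)" and "card (g ` A) \<le> card (f ` A)"
proof -
  define \<phi> where "\<phi> C = g (SOME x. x \<in> A \<and> f x = C)" for C
  have "\<phi> (f x) = g x" if "x \<in> A" for x
  proof -
    have "\<exists>y. y \<in> A \<and> f y = f x" using that by blast
    then show ?thesis unfolding \<phi>_def using coarser that by (metis (mono_tags, lifting) someI_ex)
  qed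
  then have "g ` A = \<phi> ` f ` A" by (simp add: image_image cong: image_cong)
  then show "finite (g ` A)" and "card (g ` A) \<le> card (f ` A)"
    using fin by (simp_all add: card_image_le)
qed

context group
begin

lemma inv_mult_cancel_left [simp]: "x \<in> carrier G \<Longrightarrow> y \<in> carrier G \<Longrightarrow> inv x \<otimes> (x \<otimes> y) = y"
  by (simp add: m_assoc [symmetric])

lemma mult_inv_cancel_left [simp]: "x \<in> carrier G \<Longrightarrow> y \<in> carrier G \<Longrightarrow> x \<otimes> (inv x \<otimes> y) = y"
  by (simp add: m_assoc [symmetric])

lemma rcos_eq_iff:
  assumes "subgroup H G" "x \<in> carrier G" "y \<in> carrier G"
  shows "H #> x = H #> y \<longleftrightarrow> x \<otimes> inv y \<in> H"
proof
  assume "H #> x = H #> y"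
  then have "x \<in> H #> y" using assms rcos_self by blast
  then show "x \<otimes> inv y \<in> H" using assms subgroup.rcos_module_imp[OF assms(1) is_group] by blast
next
  assume "x \<otimes> inv y \<in> H"
  then have "x \<in> H #> y" using assms subgroup.rcos_module_rev[OF assms(1) is_group] by blast
  then show "H #> x = H #> y" using assms repr_independence by metis
qed

lemma card_conjugates_le_index:
  assumes F: "subgroup F G" and D: "subgroup D G" and "F \<subseteq> R" and w: "w \<in> F"
    and comm: "\<And>d. d \<in> D \<Longrightarrow> d \<in> F \<Longrightarrow> d \<otimes> w = w \<otimes> d"
    and fin: "finite {D #> g | g. g \<in> R}"
  shows "finite {k \<otimes> w \<otimes> inv k | k. k \<in> F}"
    and "card {k \<otimes> w \<otimes> inv k | k. k \<in> F} \<le> card {D #> g | g. g \<in> R}"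
proof -
  have FG: "F \<subseteq> carrier G" and wG: "w \<in> carrier G"
    using F w subgroup.subset by blast+
  have cosets: "(\<lambda>k. D #> inv k) ` F \<subseteq> {D #> g | g. g \<in> R}"
    using \<open>F \<subseteq> R\<close> subgroup.m_inv_closed[OF F] by blast
  have coarser: "k \<otimes> w \<otimes> inv k = k' \<otimes> w \<otimes> inv k'"
    if k: "k \<in> F" "k' \<in> F" and eq: "D #> inv k = D #> inv k'" for k k'
  proof -
    define h where "h = inv k \<otimes> k'"
    have kG: "k \<in> carrier G" "k' \<in> carrier G" using k FG by auto
    have "h \<in> D" unfolding h_def using rcos_eq_iff[OF D] eq kG by simp
    moreover have "h \<in> F" unfolding h_def using F k by (simp add: subgroup.m_closed subgroup.m_inv_closed)
    ultimately have hw: "h \<otimes> w = w \<otimes> h" by (rule comm)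
    have hG: "h \<in> carrier G" unfolding h_def using kG by simp
    have "k' = k \<otimes> h" unfolding h_def using kG by simp
    then have "k' \<otimes> w \<otimes> inv k' = k \<otimes> ((h \<otimes> w) \<otimes> inv h) \<otimes> inv k"
      using kG hG wG by (simp add: inv_mult_group m_assoc)
    also have "(h \<otimes> w) \<otimes> inv h = w" using hw hG wG by (simp add: m_assoc)
    finally show ?thesis by simp
  qed
  have "finite ((\<lambda>k. D #> inv k) ` F)" using finite_subset[OF cosets fin] .
  note bound = card_image_le_if_coarser[of "\<lambda>k. D #> inv k" F "\<lambda>k. k \<otimes> w \<otimes> inv k", OF this coarser]
  have conjugates: "{k \<otimes> w \<otimes> inv k | k. k \<in> F} = (\<lambda>k. k \<otimes> w \<otimes> inv k) ` F" by blast
  show "finite {k \<otimes> w \<otimes> inv k | k. k \<in> F}"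
    unfolding conjugates by (rule bound(1))
  show "card {k \<otimes> w \<otimes> inv k | k. k \<in> F} \<le> card {D #> g | g. g \<in> R}"
    unfolding conjugates using bound(2) card_mono[OF fin cosets] by (rule le_trans)
qed

lemma finite_rcosets_if_contains_intersection:
  assumes D: "subgroup D G" and K: "subgroup K G" and F: "subgroup F G"
    and "F \<subseteq> R" and DFK: "D \<inter> F \<subseteq> K" and fin: "finite {D #> g | g. g \<in> R}"
  shows "finite {K #> g | g. g \<in> F}"
proof -
  have FG: "F \<subseteq> carrier G" using F subgroup.subset by blast
  have "K #> g = K #> g'" if g: "g \<in> F" "g' \<in> F" and "D #> g = D #> g'" for g g'
  proof -
    have "g \<otimes> inv g' \<in> D" using rcos_eq_iff[OF D] g FG \<open>D #> g = D #> g'\<close> by blast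
    moreover have "g \<otimes> inv g' \<in> F" using F g by (simp add: subgroup.m_closed subgroup.m_inv_closed)
    ultimately show ?thesis using rcos_eq_iff[OF K] g FG DFK by blast
  qed
  moreover have "(\<lambda>g. D #> g) ` F \<subseteq> {D #> g | g. g \<in> R}" using \<open>F \<subseteq> R\<close> by blast
  then have "finite ((\<lambda>g. D #> g) ` F)" using fin by (rule finite_subset)
  ultimately have "finite ((\<lambda>g. K #> g) ` F)" by (rule card_image_le_if_coarser(1)[rotated])
  then show ?thesis by (simp add: setcompr_eq_image)
qed

lemma conjugation_generate:
  assumes d: "d \<in> carrier G" and S: "S \<subseteq> carrier G"
  shows "(\<lambda>x. d \<otimes> x \<otimes> inv d) ` generate G S = generate G ((\<lambda>x. d \<otimes> x \<otimes> inv d) ` S)"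
proof -
  have "(\<lambda>x. d \<otimes> x \<otimes> inv d) \<in> hom G G"
    using d by (intro homI) (simp_all add: m_assoc)
  then have "group_hom G G (\<lambda>x. d \<otimes> x \<otimes> inv d)"
    by (simp add: group_hom_def group_hom_axioms_def is_group)
  from group_hom.generate_img[OF this S] show ?thesis by simp
qed

lemma generate_conjugates_normalized:
  assumes D: "subgroup D G" and z: "z \<in> carrier G" and d: "d \<in> D"
  shows "{d \<otimes> x \<otimes> inv d | x. x \<in> generate G {e \<otimes> z \<otimes> inv e | e. e \<in> D}}
    = generate G {e \<otimes> z \<otimes> inv e | e. e \<in> D}"
proof -
  let ?C = "{e \<otimes> z \<otimes> inv e | e. e \<in> D}"
  have DG: "D \<subseteq> carrier G" and dG: "d \<in> carrier G" using D d subgroup.subset by blast+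
  have CG: "?C \<subseteq> carrier G" using DG z by auto
  have "(\<lambda>x. d \<otimes> x \<otimes> inv d) ` ?C = ?C"
  proof (intro equalityI subsetI)
    fix x assume "x \<in> (\<lambda>x. d \<otimes> x \<otimes> inv d) ` ?C"
    then obtain e where e: "e \<in> D" "x = d \<otimes> (e \<otimes> z \<otimes> inv e) \<otimes> inv d" by blast
    then have "x = (d \<otimes> e) \<otimes> z \<otimes> inv (d \<otimes> e)"
      using DG dG z \<open>e \<in> D\<close> subsetD[OF DG] by (simp add: m_assoc inv_mult_group)
    then show "x \<in> ?C" using e(1) d subgroup.m_closed[OF D] by blast
  next
    fix x assume "x \<in> ?C"
    then obtain e where e: "e \<in> D" "x = e \<otimes> z \<otimes> inv e" by blast
    then have "x = d \<otimes> ((inv d \<otimes> e) \<otimes> z \<otimes> inv (inv d \<otimes> e)) \<otimes> inv d"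
      using DG dG z \<open>e \<in> D\<close> subsetD[OF DG] by (simp add: m_assoc inv_mult_group)
    moreover have "inv d \<otimes> e \<in> D" using e(1) d D by (simp add: subgroup.m_closed subgroup.m_inv_closed)
    ultimately show "x \<in> (\<lambda>x. d \<otimes> x \<otimes> inv d) ` ?C" by blast
  qed
  then show ?thesis using conjugation_generate[OF dG CG] by (simp add: setcompr_eq_image)
qed

lemma rcoset_representatives:
  assumes K: "subgroup K G" and A: "subgroup A G"
  obtains rp where "\<And>x. x \<in> A \<Longrightarrow> rp x \<in> A \<and> K #> rp x = K #> x"
    and "\<And>x y. K #> x = K #> y \<Longrightarrow> rp x = rp y"
    and "\<And>k. k \<in> K \<Longrightarrow> rp k = \<one>"
proof -
  define rep where "rep C = (if C = K then \<one> else SOME t. t \<in> A \<and> K #> t = C)" for C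
  have rep: "rep (K #> x) \<in> A \<and> K #> rep (K #> x) = K #> x" if "x \<in> A" for x
  proof (cases "K #> x = K")
    case True
    then show ?thesis using subgroup.subset[OF K] subgroup.one_closed[OF A] by (simp add: rep_def)
  next
    case False
    have "\<exists>t. t \<in> A \<and> K #> t = K #> x" using that by blast
    from someI_ex[OF this] show ?thesis using False by (simp add: rep_def)
  qed
  have "rep (K #> k) = \<one>" if "k \<in> K" for k
    using subgroup.rcos_const[OF K is_group that] by (simp add: rep_def)
  with rep show ?thesis by (intro that[of "\<lambda>x. rep (K #> x)"]) auto
qed

definition schreier_generators :: "('a \<Rightarrow> 'a) \<Rightarrow> 'a set \<Rightarrow> 'a set" where
  "schreier_generators rp S
    = (\<lambda>(t, s). t \<otimes> s \<otimes> inv (rp (t \<otimes> s))) ` (rp ` generate G S \<times> (S \<union> (\<lambda>s. inv s) ` S))"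

lemma schreier_generators_invariant:
  assumes S: "S \<subseteq> carrier G" and KG: "K \<subseteq> carrier G"
    and rp: "\<And>x. x \<in> generate G S \<Longrightarrow> rp x \<in> generate G S \<and> K #> rp x = K #> x"
    and rp_cong: "\<And>x y. K #> x = K #> y \<Longrightarrow> rp x = rp y"
    and a: "a \<in> generate G S" and t: "t \<in> rp ` generate G S"
  shows "t \<otimes> a \<otimes> inv (rp (t \<otimes> a)) \<in> generate G (schreier_generators rp S)"
  using a t
proof (induction a arbitrary: t rule: generate.induct)
  let ?A = "generate G S"
  have AG: "?A \<subseteq> carrier G" using generate_is_subgroup[OF S] subgroup.subset by blast
  have A: "subgroup ?A G" by (rule generate_is_subgroup[OF S])
  have TA: "t \<in> ?A" and rp_T: "rp t = t" if t: "t \<in> rp ` ?A" for t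
  proof -
    obtain x where x: "x \<in> ?A" "t = rp x" using t by blast
    show "t \<in> ?A" using rp[OF x(1)] x(2) by simp
    show "rp t = t" using rp[OF x(1)] rp_cong[of "rp x" x] x(2) by simp
  qed
  have TG: "t \<in> carrier G" if "t \<in> rp ` ?A" for t using TA[OF that] AG by blast
  {
    case one
    then have "t \<otimes> \<one> \<otimes> inv (rp (t \<otimes> \<one>)) = \<one>" using TG[OF one] rp_T[OF one] by simp
    then show ?case by (simp add: generate.one)
  next
    case (incl s)
    then show ?case
      unfolding schreier_generators_def by (intro generate.incl image_eqI[where x = "(t, s)"]) auto
  next
    case (inv s)
    then show ?case
      unfolding schreier_generators_def by (intro generate.incl image_eqI[where x = "(t, inv s)"]) auto
  next
    case (eng a b)
    have aG: "a \<in> carrier G" and bG: "b \<in> carrier G" and tG: "t \<in> carrier G"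
      using eng.hyps eng.prems AG TG by auto
    have ta: "t \<otimes> a \<in> ?A" using subgroup.m_closed[OF A TA[OF eng.prems] eng.hyps(1)] .
    define u where "u = rp (t \<otimes> a)"
    have uT: "u \<in> rp ` ?A" unfolding u_def using ta by blast
    have uG: "u \<in> carrier G" using uT by (rule TG)
    have "K #> (u \<otimes> b) = K #> (t \<otimes> a \<otimes> b)"
      using rp[OF ta] KG aG bG tG uG by (simp add: u_def coset_mult_assoc [symmetric])
    then have "rp (u \<otimes> b) = rp (t \<otimes> a \<otimes> b)" by (rule rp_cong)
    then have rp_ub: "rp (u \<otimes> b) = rp (t \<otimes> (a \<otimes> b))" using aG bG tG by (simp add: m_assoc)
    have "t \<otimes> a \<otimes> inv u \<in> generate G (schreier_generators rp S)" unfolding u_def using eng.prems by (rule eng.IH(1))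
    moreover have "u \<otimes> b \<otimes> inv (rp (u \<otimes> b)) \<in> generate G (schreier_generators rp S)" using uT by (rule eng.IH(2))
    ultimately have "(t \<otimes> a \<otimes> inv u) \<otimes> (u \<otimes> b \<otimes> inv (rp (u \<otimes> b))) \<in> generate G (schreier_generators rp S)"
      by (rule generate.eng)
    moreover have "rp (u \<otimes> b) \<in> carrier G"
      using rp[OF subgroup.m_closed[OF A TA[OF uT] eng.hyps(2)]] AG by blast
    ultimately show ?case using aG bG tG uG rp_ub by (simp add: m_assoc)
  }
qed

lemma finitely_generated_finite_index_subgroup:
  assumes S: "finite S" "S \<subseteq> carrier G" and K: "subgroup K G" and KS: "K \<subseteq> generate G S"
    and fin: "finite {K #> g | g. g \<in> generate G S}"
  shows "\<exists>T. finite T \<and> T \<subseteq> K \<and> generate G T = K"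
proof -
  let ?A = "generate G S"
  have A: "subgroup ?A G" by (rule generate_is_subgroup[OF S(2)])
  have AG: "?A \<subseteq> carrier G" and KG: "K \<subseteq> carrier G" using A K subgroup.subset by blast+
  obtain rp where rp: "\<And>x. x \<in> ?A \<Longrightarrow> rp x \<in> ?A \<and> K #> rp x = K #> x"
    and rp_cong: "\<And>x y. K #> x = K #> y \<Longrightarrow> rp x = rp y" and rp_K: "\<And>k. k \<in> K \<Longrightarrow> rp k = \<one>"
    using rcoset_representatives[OF K A] by blast
  let ?Sch = "schreier_generators rp S"
  have "finite ((\<lambda>g. K #> g) ` ?A)" using fin by (simp add: Setcompr_eq_image)
  then have "finite (rp ` ?A)" using rp_cong by (rule card_image_le_if_coarser(1))
  then have "finite ?Sch" unfolding schreier_generators_def using S(1) by (simp add: finite_cartesian_product)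
  moreover have "?Sch \<subseteq> K"
  proof
    fix x assume "x \<in> ?Sch"
    then obtain y s where y: "y \<in> ?A" and s: "s \<in> S \<union> (\<lambda>s. inv s) ` S"
      and x: "x = rp y \<otimes> s \<otimes> inv (rp (rp y \<otimes> s))"
      unfolding schreier_generators_def by auto
    have "s \<in> ?A" using s by (auto intro: generate.incl generate.inv)
    then have ys: "rp y \<otimes> s \<in> ?A" using rp[OF y] subgroup.m_closed[OF A] by blast
    then show "x \<in> K" unfolding x using rcos_eq_iff[OF K] rp[OF ys] AG by blast
  qed
  moreover have "K \<subseteq> generate G ?Sch"
  proof
    fix k assume k: "k \<in> K"
    have "\<one> \<in> rp ` ?A" using rp_K[OF subgroup.one_closed[OF K]] subgroup.one_closed[OF A] by force
    with k KS have "\<one> \<otimes> k \<otimes> inv (rp (\<one> \<otimes> k)) \<in> generate G ?Sch"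
      using schreier_generators_invariant[OF S(2) KG rp rp_cong] by blast
    then show "k \<in> generate G ?Sch" using k KG rp_K by auto
  qed
  moreover have "generate G ?Sch \<subseteq> K" using \<open>?Sch \<subseteq> K\<close> K by (rule generate_subgroup_incl)
  ultimately show ?thesis by blast
qed

end

section \<open>Permutations and their restrictions\<close>

lemma Sym_carrier: "carrier Sym = {f. bij f}"
  by (auto simp: BijGroup_def Bij_def extensional_def)

lemma Sym_mult: "bij f \<Longrightarrow> bij g \<Longrightarrow> f \<otimes>\<^bsub>Sym\<^esub> g = f \<circ> g"
  by (auto simp: BijGroup_def Bij_def extensional_def compose_def fun_eq_iff)

lemma Sym_one: "\<one>\<^bsub>Sym\<^esub> = id"
  by (auto simp: BijGroup_def fun_eq_iff)

lemma Sym_inv: "bij f \<Longrightarrow> inv\<^bsub>Sym\<^esub> f = inv' f"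
  by (subst inv_BijGroup) (auto simp: Bij_def extensional_def fun_eq_iff)

declare bij_imp_bij_inv [simp] inv_inv_eq [simp] bij_comp [simp]

lemma Sym_conj: "bij g \<Longrightarrow> bij x \<Longrightarrow> g \<otimes>\<^bsub>Sym\<^esub> x \<otimes>\<^bsub>Sym\<^esub> inv\<^bsub>Sym\<^esub> g = g \<circ> x \<circ> inv' g"
  by (simp add: Sym_mult Sym_inv)

lemma bij_comp_inv' [simp]: "bij f \<Longrightarrow> f \<circ> inv' f = id"
  by (meson bij_is_surj surj_iff)

lemma inv'_comp_bij [simp]: "bij f \<Longrightarrow> inv' f \<circ> f = id"
  by (simp add: bij_is_inj)

lemma bij_inv'_apply [simp]: "bij f \<Longrightarrow> f (inv' f x) = x"
  by (simp add: bij_is_surj surj_f_inv_f)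

lemma inv'_bij_apply [simp]: "bij f \<Longrightarrow> inv' f (f x) = x"
  by (simp add: bij_is_inj)

lemma bij_comp_inv'_cancel [simp]: "bij f \<Longrightarrow> f \<circ> (inv' f \<circ> g) = g"
  by (simp flip: comp_assoc)

lemma inv'_comp_bij_cancel [simp]: "bij f \<Longrightarrow> inv' f \<circ> (f \<circ> g) = g"
  by (simp flip: comp_assoc)

lemma subgroup_Sym_bij: "subgroup K Sym \<Longrightarrow> x \<in> K \<Longrightarrow> bij x"
  using subgroup.subset Sym_carrier by blast

lemma subgroup_Sym_comp: "subgroup K Sym \<Longrightarrow> x \<in> K \<Longrightarrow> y \<in> K \<Longrightarrow> x \<circ> y \<in> K"
  using subgroup.m_closed Sym_mult subgroup_Sym_bij by metis

lemma subgroup_Sym_inv': "subgroup K Sym \<Longrightarrow> x \<in> K \<Longrightarrow> inv' x \<in> K"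
  using subgroup.m_inv_closed Sym_inv subgroup_Sym_bij by metis

lemma subgroup_Sym_id: "subgroup K Sym \<Longrightarrow> id \<in> K"
  using subgroup.one_closed Sym_one by metis

lemma subgroup_Sym_conj: "subgroup K Sym \<Longrightarrow> g \<in> K \<Longrightarrow> x \<in> K \<Longrightarrow> g \<circ> x \<circ> inv' g \<in> K"
  by (simp add: subgroup_Sym_comp subgroup_Sym_inv')

lemma subgroup_Sym_commutator:
  "subgroup K Sym \<Longrightarrow> x \<in> K \<Longrightarrow> y \<in> K \<Longrightarrow> x \<circ> y \<circ> inv' x \<circ> inv' y \<in> K"
  by (simp add: subgroup_Sym_comp subgroup_Sym_inv')

lemma subgroup_SymI:
  assumes "\<And>x. x \<in> K \<Longrightarrow> bij x" and "id \<in> K"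
    and "\<And>x y. x \<in> K \<Longrightarrow> y \<in> K \<Longrightarrow> x \<circ> y \<in> K" and "\<And>x. x \<in> K \<Longrightarrow> inv' x \<in> K"
  shows "subgroup K Sym"
  by (rule group.subgroupI[OF group_BijGroup]) (use assms in \<open>auto simp: Sym_carrier Sym_mult Sym_inv Sym_one\<close>)

lemma subgroup_generate_Sym: "(\<And>x. x \<in> S \<Longrightarrow> bij x) \<Longrightarrow> subgroup (generate Sym S) Sym"
  by (rule group.generate_is_subgroup[OF group_BijGroup]) (auto simp: Sym_carrier)

lemma generate_Sym_induct [consumes 2, case_names id gen inv_gen comp]:
  assumes "x \<in> generate Sym S" and bij: "\<forall>s\<in>S. bij s"
    and "Q id" and "\<And>s. s \<in> S \<Longrightarrow> Q s" and "\<And>s. s \<in> S \<Longrightarrow> Q (inv' s)"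
    and "\<And>a b. a \<in> generate Sym S \<Longrightarrow> b \<in> generate Sym S \<Longrightarrow> Q a \<Longrightarrow> Q b \<Longrightarrow> Q (a \<circ> b)"
  shows "Q x"
  using assms(1)
proof (induction rule: generate.induct)
  case one
  then show ?case using assms(3) Sym_one by metis
next
  case (incl s)
  then show ?case using assms(4) by blast
next
  case (inv s)
  then show ?case using assms(5) bij by (simp add: Sym_inv)
next
  case (eng a b)
  then show ?case
    using assms(6) Sym_mult subgroup_Sym_bij[OF subgroup_generate_Sym] bij by metis
qed

lemma bij_fixing_imp_permutes: "bij p \<Longrightarrow> (\<And>x. x \<notin> A \<Longrightarrow> p x = x) \<Longrightarrow> p permutes A"
  by (rule permutes_superset[of _ UNIV]) (auto simp: permutes_univ bij_iff)

lemma Rist_iff: "subgroup G Sym \<Longrightarrow> g \<in> Rist G A \<longleftrightarrow> g \<in> G \<and> g permutes A"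
  by (auto simp: Rist_def permutes_not_in subgroup_Sym_bij intro: bij_fixing_imp_permutes)

lemma subgroup_Rist: "subgroup G Sym \<Longrightarrow> subgroup (Rist G A) Sym"
  by (rule subgroup_SymI)
    (auto simp: Rist_iff subgroup_Sym_bij subgroup_Sym_comp subgroup_Sym_inv' subgroup_Sym_id
      intro: permutes_compose permutes_inv)

lemma subgroup_permutes: "subgroup {p. p permutes A} Sym"
  by (rule subgroup_SymI) (auto simp: permutes_bij permutes_compose permutes_inv)

lemma permutes_conj:
  assumes "p permutes A" "bij h"
  shows "h \<circ> p \<circ> inv' h permutes h ` A"
proof -
  have "bij (h \<circ> p \<circ> inv' h)" using assms by (simp add: permutes_bij)
  moreover have "(h \<circ> p \<circ> inv' h) x = x" if "x \<notin> h ` A" for x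
  proof -
    have "inv' h x \<notin> A" using that assms(2) by (metis bij_inv_eq_iff image_eqI)
    then show ?thesis using assms by (simp add: permutes_not_in bij_inv_eq_iff)
  qed
  ultimately show ?thesis by (rule bij_fixing_imp_permutes)
qed

lemma permutes_disjoint_commute:
  assumes p: "p permutes A" and q: "q permutes B" and "A \<inter> B = {}"
  shows "p \<circ> q = q \<circ> p"
proof
  fix x
  show "(p \<circ> q) x = (q \<circ> p) x"
  proof (cases "x \<in> A")
    case True
    then have "x \<notin> B" "p x \<notin> B" using assms permutes_in_image[OF p] by auto
    then show ?thesis using q by (simp add: permutes_not_in)
  next
    case False
    then have "p x = x" using p by (simp add: permutes_not_in)
    moreover have "p (q x) = q x"
    proof (cases "x \<in> B")
      case True
      then have "q x \<notin> A" using assms permutes_in_image[OF q] by auto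
      then show ?thesis using p by (simp add: permutes_not_in)
    next
      case False
      then show ?thesis using p q \<open>x \<notin> A\<close> by (simp add: permutes_not_in)
    qed
    ultimately show ?thesis by simp
  qed
qed

lemma commutator_eq_id_iff: "bij x \<Longrightarrow> bij y \<Longrightarrow> x \<circ> y \<circ> inv' x \<circ> inv' y = id \<longleftrightarrow> x \<circ> y = y \<circ> x"
  by (metis comp_assoc comp_id inv'_comp_bij bij_comp_inv')

lemma comp_inv'_commute: "bij b \<Longrightarrow> a \<circ> b = b \<circ> a \<Longrightarrow> a \<circ> inv' b = inv' b \<circ> a"
proof -
  assume b: "bij b" and ab: "a \<circ> b = b \<circ> a"
  have "inv' b \<circ> (b \<circ> a) \<circ> inv' b = inv' b \<circ> (a \<circ> b) \<circ> inv' b" using ab by simp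
  then show ?thesis using b by (simp add: comp_assoc)
qed

lemma commutator_comp_commuting:
  assumes b: "bij p" "bij q" "bij w" "bij c"
    and pq: "p \<circ> q = q \<circ> p" and pw: "p \<circ> w = w \<circ> p" and pc: "p \<circ> c = c \<circ> p"
    and cq: "c \<circ> q = q \<circ> c" and cw: "c \<circ> w = w \<circ> c"
  shows "(p \<circ> q) \<circ> (w \<circ> c) \<circ> inv' (p \<circ> q) \<circ> inv' (w \<circ> c) = q \<circ> w \<circ> inv' q \<circ> inv' w"
proof -
  have c_inv'_q: "c \<circ> inv' q = inv' q \<circ> c" and c_inv'_p: "c \<circ> inv' p = inv' p \<circ> c"
    and p_inv'_q: "p \<circ> inv' q = inv' q \<circ> p"
    using b cq pc pq by (simp_all add: comp_inv'_commute)
  have "(p \<circ> q) \<circ> (w \<circ> c) \<circ> inv' (p \<circ> q) \<circ> inv' (w \<circ> c)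
      = p \<circ> q \<circ> w \<circ> (c \<circ> inv' q) \<circ> inv' p \<circ> inv' c \<circ> inv' w"
    using b by (simp add: o_inv_distrib comp_assoc)
  also have "\<dots> = p \<circ> q \<circ> w \<circ> inv' q \<circ> (c \<circ> inv' p) \<circ> inv' c \<circ> inv' w"
    by (simp add: c_inv'_q comp_assoc)
  also have "\<dots> = p \<circ> q \<circ> w \<circ> inv' q \<circ> inv' p \<circ> inv' w"
    using b by (simp add: c_inv'_p comp_assoc)
  also have "\<dots> = q \<circ> (p \<circ> w) \<circ> inv' q \<circ> inv' p \<circ> inv' w"
    by (simp add: pq comp_assoc flip: comp_assoc[of p q])
  also have "\<dots> = q \<circ> w \<circ> (p \<circ> inv' q) \<circ> inv' p \<circ> inv' w"
    by (simp add: pw comp_assoc)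
  also have "\<dots> = q \<circ> w \<circ> inv' q \<circ> inv' w"
    using b by (simp add: p_inv'_q comp_assoc)
  finally show ?thesis .
qed

lemma inv'_image_eq:
  assumes "bij g" "g ` A = A"
  shows "inv' g ` A = A"
proof -
  have "inv' g ` A = inv' g ` g ` A" using assms(2) by simp
  also have "\<dots> = A" using assms(1) by (simp add: image_comp)
  finally show ?thesis .
qed

lemma subgroup_setwise_stabilizer: "subgroup {g. bij g \<and> g ` A = A} Sym"
proof (rule subgroup_SymI)
  show "inv' g \<in> {g. bij g \<and> g ` A = A}" if "g \<in> {g. bij g \<and> g ` A = A}" for g
    using that by (simp add: inv'_image_eq)
  show "x \<circ> y \<in> {g. bij g \<and> g ` A = A}"
    if "x \<in> {g. bij g \<and> g ` A = A}" "y \<in> {g. bij g \<and> g ` A = A}" for x y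
    using that image_comp[of x y A] by simp
qed simp_all

(* The library congruence rule for restrict_id rewrites its argument pointwise, which turns
   compositions into lambda-terms that the lemmas below no longer match. *)
declare restrict_id_cong [cong del]

lemma restrict_id_id [simp]: "restrict_id id A = id"
  by (simp add: restrict_id_def fun_eq_iff)

lemma restrict_id_comp: "h ` A \<subseteq> A \<Longrightarrow> restrict_id (g \<circ> h) A = restrict_id g A \<circ> restrict_id h A"
  by (auto simp: restrict_id_def fun_eq_iff)

lemma restrict_id_of_permutes: "p permutes A \<Longrightarrow> restrict_id p A = p"
  by (auto simp: restrict_id_def fun_eq_iff permutes_not_in)

lemma restrict_id_permutes: "bij g \<Longrightarrow> g ` A = A \<Longrightarrow> restrict_id g A permutes A"
  by (metis permutes_restrict_id bij_betw_subset subset_UNIV)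

lemma restrict_id_inv':
  assumes "bij g" "g ` A = A"
  shows "inv' (restrict_id g A) = restrict_id (inv' g) A"
proof (rule permutes_invI[OF restrict_id_permutes[OF assms]])
  show "restrict_id (inv' g) A (restrict_id g A x) = x" if "x \<in> A" for x
  proof -
    have "g x \<in> A" using that assms(2) by blast
    then show ?thesis using that assms(1) by simp
  qed
qed simp

lemma restrict_id_decomp:
  assumes "bij g" "g ` A = A"
  shows "restrict_id g A \<circ> restrict_id g (- A) = g"
proof
  fix x
  have "g x \<in> A \<longleftrightarrow> x \<in> A" using assms by (metis bij_is_inj inj_image_mem_iff)
  then show "(restrict_id g A \<circ> restrict_id g (- A)) x = g x" by (cases "x \<in> A") auto
qed

lemma conj_restrict_id:
  assumes w: "bij w" "w ` A = A" and x: "x permutes A"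
  shows "w \<circ> x \<circ> inv' w = restrict_id w A \<circ> x \<circ> inv' (restrict_id w A)"
proof -
  let ?a = "restrict_id w A" and ?b = "restrict_id w (- A)"
  have a: "bij ?a" using restrict_id_permutes[OF w] by (rule permutes_bij)
  have b: "?b permutes - A" using w by (simp add: restrict_id_permutes bij_image_Compl_eq)
  have "w \<circ> x \<circ> inv' w = (?a \<circ> ?b) \<circ> x \<circ> inv' (?a \<circ> ?b)"
    by (simp only: restrict_id_decomp[OF w])
  also have "\<dots> = ?a \<circ> (?b \<circ> x \<circ> inv' ?b) \<circ> inv' ?a"
    using a permutes_bij[OF b] by (simp add: o_inv_distrib comp_assoc)
  also have "?b \<circ> x \<circ> inv' ?b = x \<circ> ?b \<circ> inv' ?b"
    using permutes_disjoint_commute[OF b x Compl_disjoint2] by (rule arg_cong)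
  also have "x \<circ> ?b \<circ> inv' ?b = x"
    using permutes_bij[OF b] by (simp add: comp_assoc)
  finally show ?thesis .
qed

lemma restrict_id_conj:
  assumes g: "bij g" "g ` A = A" and a: "bij a" "a ` A = A"
  shows "restrict_id (g \<circ> a \<circ> inv' g) A = g \<circ> restrict_id a A \<circ> inv' g"
proof -
  have "inv' g ` A = A" using g by (rule inv'_image_eq)
  then have "restrict_id (g \<circ> a \<circ> inv' g) A = restrict_id g A \<circ> restrict_id a A \<circ> restrict_id (inv' g) A"
    using a(2) by (simp add: restrict_id_comp)
  also have "\<dots> = g \<circ> restrict_id a A \<circ> inv' g"
    using conj_restrict_id[OF g restrict_id_permutes[OF a]] restrict_id_inv'[OF g] by simp
  finally show ?thesis .
qed

lemma conj_eq_if_agree: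
  assumes "bij g" "bij h" "g ` A = A" "\<And>a. a \<in> A \<Longrightarrow> g a = h a" and "x permutes A"
  shows "g \<circ> x \<circ> inv' g = h \<circ> x \<circ> inv' h"
proof -
  have "h ` A = A" and "restrict_id g A = restrict_id h A"
    using assms(3,4) by (auto simp: restrict_id_def fun_eq_iff image_def)
  then show ?thesis using assms conj_restrict_id by metis
qed

lemma subgroup_restrict_id_image:
  assumes K: "subgroup K Sym" and stable: "\<And>g. g \<in> K \<Longrightarrow> g ` A = A"
  shows "subgroup ((\<lambda>g. restrict_id g A) ` K) Sym"
proof (rule subgroup_SymI)
  show "bij x" if x: "x \<in> (\<lambda>g. restrict_id g A) ` K" for x
  proof -
    obtain g where g: "g \<in> K" "x = restrict_id g A" using x by blast
    have "x permutes A" unfolding g(2) using subgroup_Sym_bij[OF K g(1)] stable[OF g(1)] by (rule restrict_id_permutes)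
    then show ?thesis by (rule permutes_bij)
  qed
  have "restrict_id id A \<in> (\<lambda>g. restrict_id g A) ` K"
    using subgroup_Sym_id[OF K] by (rule imageI)
  then show "id \<in> (\<lambda>g. restrict_id g A) ` K" by simp
  show "x \<circ> y \<in> (\<lambda>g. restrict_id g A) ` K"
    if x: "x \<in> (\<lambda>g. restrict_id g A) ` K" and y: "y \<in> (\<lambda>g. restrict_id g A) ` K" for x y
  proof -
    obtain g h where "g \<in> K" "h \<in> K" "x = restrict_id g A" "y = restrict_id h A" using x y by blast
    moreover have "restrict_id (g \<circ> h) A = restrict_id g A \<circ> restrict_id h A"
      using stable[OF \<open>h \<in> K\<close>] by (simp add: restrict_id_comp)
    ultimately show ?thesis using subgroup_Sym_comp[OF K] by (metis imageI)
  qed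
  show "inv' x \<in> (\<lambda>g. restrict_id g A) ` K" if x: "x \<in> (\<lambda>g. restrict_id g A) ` K" for x
  proof -
    obtain g where "g \<in> K" "x = restrict_id g A" using x by blast
    moreover have "inv' (restrict_id g A) = restrict_id (inv' g) A"
      using subgroup_Sym_bij[OF K \<open>g \<in> K\<close>] stable[OF \<open>g \<in> K\<close>] by (rule restrict_id_inv')
    ultimately show ?thesis using subgroup_Sym_inv'[OF K] by (metis imageI)
  qed
qed

lemma subgroup_restrict_id_preimage:
  assumes K: "subgroup K Sym"
  shows "subgroup {g. bij g \<and> g ` A = A \<and> restrict_id g A \<in> K} Sym"
proof (rule subgroup_SymI)
  show "id \<in> {g. bij g \<and> g ` A = A \<and> restrict_id g A \<in> K}"
    using subgroup_Sym_id[OF K] by simp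
  show "x \<circ> y \<in> {g. bij g \<and> g ` A = A \<and> restrict_id g A \<in> K}"
    if "x \<in> {g. bij g \<and> g ` A = A \<and> restrict_id g A \<in> K}"
      and "y \<in> {g. bij g \<and> g ` A = A \<and> restrict_id g A \<in> K}" for x y
  proof -
    have x: "bij x" "x ` A = A" "restrict_id x A \<in> K" and y: "bij y" "y ` A = A" "restrict_id y A \<in> K"
      using that by simp_all
    have "(x \<circ> y) ` A = A" using x(2) y(2) image_comp[of x y A] by simp
    moreover have "restrict_id (x \<circ> y) A \<in> K"
      using restrict_id_comp[of y A x] y(2) subgroup_Sym_comp[OF K x(3) y(3)] by simp
    ultimately show ?thesis using x(1) y(1) by simp
  qed
  show "inv' x \<in> {g. bij g \<and> g ` A = A \<and> restrict_id g A \<in> K}"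
    if "x \<in> {g. bij g \<and> g ` A = A \<and> restrict_id g A \<in> K}" for x
    using that subgroup_Sym_inv'[OF K] by (simp add: inv'_image_eq restrict_id_inv' [symmetric])
qed simp

section \<open>Displacement configurations\<close>

locale displacement =
  fixes G P :: "('a \<Rightarrow> 'a) set" and Om :: "('a \<Rightarrow> 'a) \<Rightarrow> 'a set" and \<sigma> :: "'a \<Rightarrow> 'a"
  assumes subgroup_G: "subgroup G Sym"
    and P_carrier: "P \<subseteq> carrier Sym"
    and configuration: "displacement_configuration P Om"
    and \<sigma>_in_P: "\<sigma> \<in> P"
begin

abbreviation "R \<equiv> Rgrp G P Om"
abbreviation "M \<equiv> Mset P Om \<sigma>"

definition U :: "'a set" where "U = (\<Union>\<alpha>\<in>P. Om \<alpha>)"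
definition UM :: "'a set" where "UM = (\<Union>\<tau>\<in>M. Om \<tau>)"
definition pullback :: "('a \<Rightarrow> 'a) \<Rightarrow> 'a \<Rightarrow> 'a" where "pullback x = inv' \<sigma> \<circ> x \<circ> \<sigma>"

lemma bij_\<sigma>: "bij \<sigma>"
  using \<sigma>_in_P P_carrier by (auto simp: Sym_carrier)

lemma Om_eq_or_disjoint: "\<tau> \<in> P \<Longrightarrow> \<rho> \<in> P \<Longrightarrow> Om \<tau> = Om \<rho> \<or> Om \<tau> \<inter> Om \<rho> = {}"
  using configuration by (simp add: displacement_configuration_def)

lemma Om_subset_U: "\<tau> \<in> P \<Longrightarrow> Om \<tau> \<subseteq> U"
  by (auto simp: U_def)

lemma M_iff: "\<tau> \<in> M \<longleftrightarrow> \<tau> \<in> P \<and> \<sigma> ` Om \<tau> \<inter> U = {}"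
  by (auto simp: Mset_def U_def)

lemma M_subset_P: "M \<subseteq> P"
  by (auto simp: Mset_def)

lemma Om_subset_UM: "\<tau> \<in> M \<Longrightarrow> Om \<tau> \<subseteq> UM"
  by (auto simp: UM_def)

lemma UM_subset_U: "UM \<subseteq> U"
  using M_subset_P by (auto simp: UM_def U_def)

lemma \<sigma>_image_Om_\<sigma>_disjoint_U: "\<sigma> ` Om \<sigma> \<inter> U = {}"
  using configuration \<sigma>_in_P by (simp add: displacement_configuration_def U_def)

lemma \<sigma>_in_M: "\<sigma> \<in> M"
  using M_iff \<sigma>_in_P \<sigma>_image_Om_\<sigma>_disjoint_U by blast

lemma \<sigma>_fixes_U_minus_UM:
  assumes "x \<in> U" "x \<notin> UM"
  shows "\<sigma> x = x"
proof -
  obtain \<alpha> where \<alpha>: "\<alpha> \<in> P" "x \<in> Om \<alpha>" using assms(1) by (auto simp: U_def)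
  then have "\<sigma> ` Om \<alpha> \<inter> U \<noteq> {}" using assms(2) M_iff by (auto simp: UM_def)
  moreover have "(\<forall>y\<in>Om \<alpha>. \<sigma> y = y) \<or> \<sigma> ` Om \<alpha> \<inter> U = {}"
    using configuration \<sigma>_in_P \<alpha>(1) by (simp add: displacement_configuration_def U_def)
  ultimately show ?thesis using \<alpha>(2) by blast
qed

lemma \<sigma>_maps_U_outside_UM:
  assumes "y \<in> U"
  shows "\<sigma> y \<notin> UM"
proof (cases "y \<in> UM")
  case True
  then obtain \<tau> where "\<tau> \<in> M" "y \<in> Om \<tau>" by (auto simp: UM_def)
  then have "\<sigma> y \<notin> U" using M_iff by blast
  then show ?thesis using UM_subset_U by blast
next
  case False
  then show ?thesis using \<sigma>_fixes_U_minus_UM[OF assms] by simp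
qed

lemma inv_\<sigma>_image_UM_disjoint_U: "inv' \<sigma> ` UM \<inter> U = {}"
proof -
  have "inv' \<sigma> y \<notin> U" if "y \<in> UM" for y
    using that \<sigma>_maps_U_outside_UM[of "inv' \<sigma> y"] bij_\<sigma> by auto
  then show ?thesis by blast
qed

lemma \<sigma>_image_Om_\<sigma>_disjoint_inv_\<sigma>_image_UM: "\<sigma> ` Om \<sigma> \<inter> inv' \<sigma> ` UM = {}"
proof -
  have "\<sigma> ` Om \<sigma> \<inter> (\<Union>\<alpha>\<in>P. (inv\<^bsub>Sym\<^esub> \<sigma>) ` Om \<alpha>) = {}"
    using configuration \<sigma>_in_P by (simp add: displacement_configuration_def)
  then have "\<sigma> ` Om \<sigma> \<inter> (\<Union>\<alpha>\<in>P. inv' \<sigma> ` Om \<alpha>) = {}"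
    by (simp add: Sym_inv[OF bij_\<sigma>])
  moreover have "inv' \<sigma> ` UM \<subseteq> (\<Union>\<alpha>\<in>P. inv' \<sigma> ` Om \<alpha>)"
    using M_subset_P by (auto simp: UM_def)
  ultimately show ?thesis by blast
qed

lemma R_subgroup: "subgroup R Sym"
  unfolding Rgrp_def using subgroup_Sym_bij[OF subgroup_Rist[OF subgroup_G]]
  by (intro subgroup_generate_Sym) blast

lemma R_bij: "r \<in> R \<Longrightarrow> bij r"
  by (rule subgroup_Sym_bij[OF R_subgroup])

lemma Rist_subset_R: "\<tau> \<in> P \<Longrightarrow> Rist G (Om \<tau>) \<subseteq> R"
  unfolding Rgrp_def by (auto intro: generate.incl)

lemma Rist_image_restrict_Om:
  assumes "\<alpha> \<in> P" "\<tau> \<in> P" and g: "g \<in> Rist G (Om \<alpha>)"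
  shows "g ` Om \<tau> = Om \<tau> \<and> restrict_id g (Om \<tau>) \<in> Rist G (Om \<tau>)"
proof -
  have gp: "g permutes Om \<alpha>" using g Rist_iff[OF subgroup_G] by blast
  show ?thesis
  proof (cases "Om \<alpha> = Om \<tau>")
    case True
    then show ?thesis using g gp by (simp add: permutes_image restrict_id_of_permutes)
  next
    case False
    then have "\<forall>x\<in>Om \<tau>. g x = x"
      using Om_eq_or_disjoint[OF assms(1,2)] gp by (meson disjoint_iff permutes_not_in)
    then have "g ` Om \<tau> = Om \<tau>" and "restrict_id g (Om \<tau>) = id"
      by (auto simp: restrict_id_def fun_eq_iff)
    then show ?thesis using subgroup_Sym_id[OF subgroup_Rist[OF subgroup_G]] by simp
  qed
qed

lemma R_permutes_U: "r \<in> R \<Longrightarrow> r permutes U"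
proof -
  have "R \<subseteq> {p. p permutes U}"
    unfolding Rgrp_def using Om_subset_U Rist_iff[OF subgroup_G]
    by (intro group.generate_subgroup_incl[OF group_BijGroup _ subgroup_permutes])
      (blast intro: permutes_subset)
  then show "r \<in> R \<Longrightarrow> r permutes U" by blast
qed

lemma R_image_restrict_Om:
  assumes "r \<in> R" "\<tau> \<in> P"
  shows "r ` Om \<tau> = Om \<tau> \<and> restrict_id r (Om \<tau>) \<in> Rist G (Om \<tau>)"
proof -
  let ?Q = "{g. bij g \<and> g ` Om \<tau> = Om \<tau> \<and> restrict_id g (Om \<tau>) \<in> Rist G (Om \<tau>)}"
  have "R \<subseteq> ?Q"
    unfolding Rgrp_def
  proof (rule group.generate_subgroup_incl[OF group_BijGroup _ subgroup_restrict_id_preimage])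
    show "(\<Union>\<alpha>\<in>P. Rist G (Om \<alpha>)) \<subseteq> ?Q"
      using Rist_image_restrict_Om[OF _ assms(2)] subgroup_Sym_bij[OF subgroup_Rist[OF subgroup_G]] by blast
  qed (rule subgroup_Rist[OF subgroup_G])
  then show ?thesis using assms(1) by blast
qed

lemma R_image_Om: "r \<in> R \<Longrightarrow> \<tau> \<in> P \<Longrightarrow> r ` Om \<tau> = Om \<tau>"
  using R_image_restrict_Om by blast

lemma R_restrict_Om: "r \<in> R \<Longrightarrow> \<tau> \<in> P \<Longrightarrow> restrict_id r (Om \<tau>) \<in> Rist G (Om \<tau>)"
  using R_image_restrict_Om by blast

lemma R_image_UM:
  assumes "r \<in> R"
  shows "r ` UM = UM"
proof -
  have "r ` Om \<tau> = Om \<tau>" if "\<tau> \<in> M" for \<tau>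
    using R_image_Om[OF assms] M_subset_P that by blast
  then show ?thesis unfolding UM_def image_UN by simp
qed

lemma R_restrict_UM_permutes: "r \<in> R \<Longrightarrow> restrict_id r UM permutes UM"
  using R_bij R_image_UM by (rule restrict_id_permutes)

lemma pullback_permutes: "v permutes UM \<Longrightarrow> pullback v permutes inv' \<sigma> ` UM"
  using permutes_conj[of v UM "inv' \<sigma>"] bij_\<sigma> by (simp add: pullback_def)

lemma pullback_comp: "pullback (x \<circ> y) = pullback x \<circ> pullback y"
  using bij_\<sigma> by (simp add: pullback_def comp_assoc)

lemma pullback_id: "pullback id = id"
  using bij_\<sigma> by (simp add: pullback_def)

lemma permutes_U_commute_pullback:
  "g permutes U \<Longrightarrow> v permutes UM \<Longrightarrow> g \<circ> pullback v = pullback v \<circ> g"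
  using permutes_disjoint_commute[OF _ pullback_permutes] inv_\<sigma>_image_UM_disjoint_U by blast

lemma \<sigma>_commute_restrict_outside_UM:
  assumes r: "r \<in> R"
  shows "\<sigma> \<circ> restrict_id r (- UM) = restrict_id r (- UM) \<circ> \<sigma>"
proof -
  have "\<sigma> permutes - (U - UM)"
    using bij_\<sigma> \<sigma>_fixes_U_minus_UM by (intro bij_fixing_imp_permutes) auto
  moreover have "restrict_id r (- UM) permutes U - UM"
  proof (rule bij_fixing_imp_permutes)
    have "r ` (- UM) = - UM" using bij_image_Compl_eq[OF R_bij[OF r]] R_image_UM[OF r] by simp
    with R_bij[OF r] have "restrict_id r (- UM) permutes - UM" by (rule restrict_id_permutes)
    then show "bij (restrict_id r (- UM))" by (rule permutes_bij)
    show "restrict_id r (- UM) x = x" if "x \<notin> U - UM" for x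
      using that permutes_not_in[OF R_permutes_U[OF r]] by (cases "x \<in> UM") auto
  qed
  ultimately show ?thesis by (rule permutes_disjoint_commute) blast
qed

lemma \<sigma>_conjugates_quotient:
  assumes \<gamma>: "\<gamma> \<in> R" and \<delta>: "\<delta> \<in> R"
  shows "inv' (\<gamma> \<circ> \<sigma> \<circ> inv' \<gamma>) \<circ> (\<delta> \<circ> \<sigma> \<circ> inv' \<delta>)
    = pullback (restrict_id (inv' \<gamma> \<circ> \<delta>) UM) \<circ> restrict_id (\<gamma> \<circ> inv' \<delta>) UM"
proof -
  have b: "bij \<gamma>" "bij \<delta>" "bij \<sigma>" using R_bij \<gamma> \<delta> bij_\<sigma> by auto
  define a where "a = inv' \<gamma> \<circ> \<delta>"
  have a: "a \<in> R" unfolding a_def using \<gamma> \<delta> R_subgroup by (simp add: subgroup_Sym_comp subgroup_Sym_inv')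
  have ba: "bij a" "a ` UM = UM" using R_bij[OF a] R_image_UM[OF a] by auto
  define aM where "aM = restrict_id a UM"
  define aO where "aO = restrict_id a (- UM)"
  have aM: "aM permutes UM" unfolding aM_def using ba by (rule restrict_id_permutes)
  have baM: "bij aM" using aM by (rule permutes_bij)
  have a_eq: "a = aM \<circ> aO" unfolding aM_def aO_def using restrict_id_decomp[OF ba] by simp
  have "inv' (\<gamma> \<circ> \<sigma> \<circ> inv' \<gamma>) \<circ> (\<delta> \<circ> \<sigma> \<circ> inv' \<delta>) = \<gamma> \<circ> (inv' \<sigma> \<circ> a \<circ> \<sigma>) \<circ> inv' \<delta>"
    unfolding a_def using b by (simp add: o_inv_distrib comp_assoc)
  also have "inv' \<sigma> \<circ> a \<circ> \<sigma> = pullback aM \<circ> aO"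
    using \<sigma>_commute_restrict_outside_UM[OF a, folded aO_def] b(3)
    by (simp add: a_eq pullback_def comp_assoc)
  also have "\<gamma> \<circ> (pullback aM \<circ> aO) \<circ> inv' \<delta> = pullback aM \<circ> (\<gamma> \<circ> aO \<circ> inv' \<delta>)"
    using permutes_U_commute_pullback[OF R_permutes_U[OF \<gamma>] aM] by (simp flip: comp_assoc)
  also have "\<gamma> \<circ> aO \<circ> inv' \<delta> = \<gamma> \<circ> inv' aM \<circ> inv' \<gamma>"
  proof -
    have "aO = inv' aM \<circ> a" using a_eq baM by simp
    then show ?thesis using b by (simp add: a_def comp_assoc)
  qed
  also have "\<gamma> \<circ> inv' aM \<circ> inv' \<gamma> = restrict_id (\<gamma> \<circ> inv' a \<circ> inv' \<gamma>) UM"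
    using restrict_id_conj[OF b(1) R_image_UM[OF \<gamma>] bij_imp_bij_inv[OF ba(1)] inv'_image_eq[OF ba]]
      restrict_id_inv'[OF ba] by (simp add: aM_def)
  also have "\<gamma> \<circ> inv' a \<circ> inv' \<gamma> = \<gamma> \<circ> inv' \<delta>"
    using b by (simp add: a_def o_inv_distrib comp_assoc)
  finally show ?thesis unfolding aM_def a_def .
qed

lemma conj_pullback_decomp:
  assumes \<gamma>: "\<gamma> \<in> R" and r: "r \<in> R" and d: "d \<in> Rist G (Om \<sigma>)"
  shows "(\<gamma> \<circ> \<sigma> \<circ> inv' \<gamma>) \<circ> (pullback (restrict_id r UM) \<circ> d) \<circ> inv' (\<gamma> \<circ> \<sigma> \<circ> inv' \<gamma>)
      = (\<gamma> \<circ> restrict_id r UM \<circ> inv' \<gamma>) \<circ> (\<sigma> \<circ> (inv' \<gamma> \<circ> d \<circ> \<gamma>) \<circ> inv' \<sigma>)"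
    and "\<sigma> \<circ> (inv' \<gamma> \<circ> d \<circ> \<gamma>) \<circ> inv' \<sigma> permutes \<sigma> ` Om \<sigma>"
proof -
  define v where "v = restrict_id r UM"
  define c where "c = \<sigma> \<circ> (inv' \<gamma> \<circ> d \<circ> \<gamma>) \<circ> inv' \<sigma>"
  have b: "bij \<gamma>" "bij \<sigma>" "bij d"
    using R_bij[OF \<gamma>] bij_\<sigma> subgroup_Sym_bij[OF subgroup_Rist[OF subgroup_G] d] by auto
  have inv_\<gamma>: "inv' \<gamma> permutes U" using R_permutes_U[OF \<gamma>] by (rule permutes_inv)
  have "inv' \<gamma> \<circ> d \<circ> inv' (inv' \<gamma>) permutes inv' \<gamma> ` Om \<sigma>"
    using d Rist_iff[OF subgroup_G] b(1) by (intro permutes_conj) auto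
  moreover have "inv' \<gamma> ` Om \<sigma> = Om \<sigma>" using b(1) R_image_Om[OF \<gamma> \<sigma>_in_P] by (rule inv'_image_eq)
  ultimately have "inv' \<gamma> \<circ> d \<circ> \<gamma> permutes Om \<sigma>" using b(1) by simp
  then show c: "\<sigma> \<circ> (inv' \<gamma> \<circ> d \<circ> \<gamma>) \<circ> inv' \<sigma> permutes \<sigma> ` Om \<sigma>" using b(2) by (rule permutes_conj)
  have commute_v: "inv' \<gamma> \<circ> pullback v = pullback v \<circ> inv' \<gamma>"
    unfolding v_def using inv_\<gamma> R_restrict_UM_permutes[OF r] by (rule permutes_U_commute_pullback)
  have commute_c: "c \<circ> inv' \<gamma> = inv' \<gamma> \<circ> c"
    unfolding c_def using c inv_\<gamma> \<sigma>_image_Om_\<sigma>_disjoint_U by (rule permutes_disjoint_commute)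
  have "(\<gamma> \<circ> \<sigma> \<circ> inv' \<gamma>) \<circ> (pullback v \<circ> d) \<circ> inv' (\<gamma> \<circ> \<sigma> \<circ> inv' \<gamma>)
      = \<gamma> \<circ> \<sigma> \<circ> (inv' \<gamma> \<circ> pullback v) \<circ> d \<circ> \<gamma> \<circ> inv' \<sigma> \<circ> inv' \<gamma>"
    using b by (simp add: o_inv_distrib comp_assoc)
  also have "\<dots> = \<gamma> \<circ> \<sigma> \<circ> (pullback v \<circ> inv' \<gamma>) \<circ> d \<circ> \<gamma> \<circ> inv' \<sigma> \<circ> inv' \<gamma>"
    by (simp only: commute_v)
  also have "\<dots> = \<gamma> \<circ> v \<circ> (c \<circ> inv' \<gamma>)"
    using b(2) by (simp add: pullback_def c_def comp_assoc)
  also have "\<dots> = (\<gamma> \<circ> v \<circ> inv' \<gamma>) \<circ> c"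
    by (simp add: commute_c comp_assoc)
  finally show "(\<gamma> \<circ> \<sigma> \<circ> inv' \<gamma>) \<circ> (pullback (restrict_id r UM) \<circ> d) \<circ> inv' (\<gamma> \<circ> \<sigma> \<circ> inv' \<gamma>)
      = (\<gamma> \<circ> restrict_id r UM \<circ> inv' \<gamma>) \<circ> (\<sigma> \<circ> (inv' \<gamma> \<circ> d \<circ> \<gamma>) \<circ> inv' \<sigma>)"
    unfolding v_def c_def .
qed

lemma commutator_of_lifts:
  assumes \<tau>: "\<tau> \<in> M" and p: "p permutes inv' \<sigma> ` UM" and d: "d permutes Om \<tau>"
    and w: "w permutes UM" "w ` Om \<tau> = Om \<tau>" and c: "c permutes \<sigma> ` Om \<sigma>"
  shows "(p \<circ> d) \<circ> (w \<circ> c) \<circ> inv' (p \<circ> d) \<circ> inv' (w \<circ> c)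
    = d \<circ> restrict_id w (Om \<tau>) \<circ> inv' d \<circ> inv' (restrict_id w (Om \<tau>))"
proof -
  have UM_U: "Om \<tau> \<subseteq> U" using Om_subset_UM[OF \<tau>] UM_subset_U by (rule order_trans)
  have dU: "d permutes U" using d UM_U by (rule permutes_subset)
  have wU: "w permutes U" using w(1) UM_subset_U by (rule permutes_subset)
  have disj: "inv' \<sigma> ` UM \<inter> U = {}" "\<sigma> ` Om \<sigma> \<inter> U = {}" "inv' \<sigma> ` UM \<inter> \<sigma> ` Om \<sigma> = {}"
    using inv_\<sigma>_image_UM_disjoint_U \<sigma>_image_Om_\<sigma>_disjoint_U \<sigma>_image_Om_\<sigma>_disjoint_inv_\<sigma>_image_UM
    by (simp_all add: Int_commute)
  have "(p \<circ> d) \<circ> (w \<circ> c) \<circ> inv' (p \<circ> d) \<circ> inv' (w \<circ> c) = d \<circ> w \<circ> inv' d \<circ> inv' w"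
    using permutes_bij[OF p] permutes_bij[OF d] permutes_bij[OF w(1)] permutes_bij[OF c]
      permutes_disjoint_commute[OF p dU disj(1)] permutes_disjoint_commute[OF p wU disj(1)]
      permutes_disjoint_commute[OF p c disj(3)] permutes_disjoint_commute[OF c dU disj(2)]
      permutes_disjoint_commute[OF c wU disj(2)]
    by (rule commutator_comp_commuting)
  also have "\<dots> = d \<circ> (w \<circ> inv' d \<circ> inv' w)" by (simp add: comp_assoc)
  also have "w \<circ> inv' d \<circ> inv' w = restrict_id w (Om \<tau>) \<circ> inv' d \<circ> inv' (restrict_id w (Om \<tau>))"
    using permutes_bij[OF w(1)] w(2) permutes_inv[OF d] by (rule conj_restrict_id)
  finally show ?thesis by (simp only: comp_assoc)
qed

lemma conj_restrict_UM_permutes: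
  assumes "\<gamma> \<in> R" "r \<in> R"
  shows "\<gamma> \<circ> restrict_id r UM \<circ> inv' \<gamma> permutes UM"
proof -
  have "\<gamma> \<circ> restrict_id r UM \<circ> inv' \<gamma> permutes \<gamma> ` UM"
    using R_restrict_UM_permutes[OF assms(2)] R_bij[OF assms(1)] by (rule permutes_conj)
  then show ?thesis using R_image_UM[OF assms(1)] by simp
qed

lemma conj_restrict_UM_on_Om:
  assumes \<gamma>: "\<gamma> \<in> R" and r: "r \<in> R" and \<tau>: "\<tau> \<in> M"
  shows "(\<gamma> \<circ> restrict_id r UM \<circ> inv' \<gamma>) ` Om \<tau> = Om \<tau>"
    and "restrict_id (\<gamma> \<circ> restrict_id r UM \<circ> inv' \<gamma>) (Om \<tau>) \<in> Rist G (Om \<tau>)"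
proof -
  let ?w = "\<gamma> \<circ> restrict_id r UM \<circ> inv' \<gamma>" and ?\<gamma>r = "\<gamma> \<circ> r \<circ> inv' \<gamma>"
  have \<tau>P: "\<tau> \<in> P" using \<tau> M_subset_P by blast
  have \<gamma>r: "?\<gamma>r \<in> R" using \<gamma> r by (rule subgroup_Sym_conj[OF R_subgroup])
  have agree: "?w y = ?\<gamma>r y" if "y \<in> Om \<tau>" for y
  proof -
    have "inv' \<gamma> y \<in> UM"
      using that Om_subset_UM[OF \<tau>] inv'_image_eq[OF R_bij[OF \<gamma>] R_image_UM[OF \<gamma>]] by blast
    then show ?thesis by simp
  qed
  have "?w ` Om \<tau> = ?\<gamma>r ` Om \<tau>" using agree by (rule image_cong[OF refl])
  then show "?w ` Om \<tau> = Om \<tau>" using R_image_Om[OF \<gamma>r \<tau>P] by simp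
  have "restrict_id ?w (Om \<tau>) = restrict_id ?\<gamma>r (Om \<tau>)" using agree by (auto simp: restrict_id_def)
  then show "restrict_id ?w (Om \<tau>) \<in> Rist G (Om \<tau>)" using R_restrict_Om[OF \<gamma>r \<tau>P] by simp
qed

lemma conj_restrict_UM_nontrivial_on_Om:
  assumes \<gamma>: "\<gamma> \<in> R" and r: "r \<in> R" "restrict_id r UM \<noteq> id"
  obtains \<tau> where "\<tau> \<in> M" and "restrict_id (\<gamma> \<circ> restrict_id r UM \<circ> inv' \<gamma>) (Om \<tau>) \<noteq> id"
proof -
  let ?w = "\<gamma> \<circ> restrict_id r UM \<circ> inv' \<gamma>"
  have "restrict_id r UM = inv' \<gamma> \<circ> ?w \<circ> \<gamma>" using R_bij[OF \<gamma>] by (simp add: comp_assoc)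
  then have "?w \<noteq> id" using r(2) R_bij[OF \<gamma>] by auto
  then obtain x where x: "?w x \<noteq> x" by (auto simp: fun_eq_iff)
  then have "x \<in> UM" using conj_restrict_UM_permutes[OF \<gamma> r(1)] by (meson permutes_not_in)
  then obtain \<tau> where \<tau>: "\<tau> \<in> M" "x \<in> Om \<tau>" by (auto simp: UM_def)
  have "restrict_id ?w (Om \<tau>) \<noteq> id" using \<tau>(2) x by (metis id_apply restrict_id_simps(1))
  with \<tau>(1) show ?thesis by (rule that)
qed

end


section \<open>Lifting \<open>D\<^sub>\<sigma>\<^sub>,\<^sub>k\<close> to \<open>H\<^sub>k\<close>\<close>

locale displacement_subgroup = displacement +
  fixes Hk :: "('a \<Rightarrow> 'a) set"
  assumes subgroup_Hk: "subgroup Hk Sym"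
begin

abbreviation "Y \<equiv> Yset R \<sigma> Hk"
abbreviation "D \<equiv> Dgrp R \<sigma> Hk"

lemma Y_iff: "\<gamma> \<in> Y \<longleftrightarrow> \<gamma> \<in> R \<and> \<gamma> \<circ> \<sigma> \<circ> inv' \<gamma> \<in> Hk"
  using R_bij bij_\<sigma> by (auto simp: Yset_def Sym_conj)

lemma D_eq: "D = generate Sym {\<gamma> \<circ> inv' \<delta> | \<gamma> \<delta>. \<gamma> \<in> Y \<and> \<delta> \<in> Y}"
proof -
  have "\<gamma> \<otimes>\<^bsub>Sym\<^esub> inv\<^bsub>Sym\<^esub> \<delta> = \<gamma> \<circ> inv' \<delta>" if "\<gamma> \<in> Y" "\<delta> \<in> Y" for \<gamma> \<delta>
    using that R_bij Y_iff by (simp add: Sym_mult Sym_inv)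
  then show ?thesis unfolding Dgrp_def by (metis (no_types, lifting))
qed

lemma D_generators_in_R: "{\<gamma> \<circ> inv' \<delta> | \<gamma> \<delta>. \<gamma> \<in> Y \<and> \<delta> \<in> Y} \<subseteq> R"
  using Y_iff R_subgroup by (auto simp: subgroup_Sym_comp subgroup_Sym_inv')

lemma D_generators_bij: "\<forall>s \<in> {\<gamma> \<circ> inv' \<delta> | \<gamma> \<delta>. \<gamma> \<in> Y \<and> \<delta> \<in> Y}. bij s"
  using D_generators_in_R R_bij by blast

lemma D_subgroup: "subgroup D Sym"
  unfolding D_eq using D_generators_bij by (intro subgroup_generate_Sym) blast

lemma D_subset_R: "D \<subseteq> R"
  unfolding D_eq by (rule group.generate_subgroup_incl[OF group_BijGroup D_generators_in_R R_subgroup])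

text \<open>The pullback factor is supported on \<open>\<sigma>\<^sup>-\<^sup>1(UM)\<close>, which is disjoint from every \<open>Om \<alpha>\<close>, so a
  lift acts on \<open>UM\<close> exactly like \<open>d\<close>.\<close>
definition lifts_to_Hk :: "('a \<Rightarrow> 'a) \<Rightarrow> bool" where
  "lifts_to_Hk d \<longleftrightarrow> (\<exists>r\<in>R. pullback (restrict_id r UM) \<circ> restrict_id d UM \<in> Hk)"

lemma lifts_to_Hk_id: "lifts_to_Hk id"
proof -
  have "pullback (restrict_id id UM) \<circ> restrict_id id UM = id" by (simp add: pullback_id)
  then show ?thesis
    unfolding lifts_to_Hk_def using subgroup_Sym_id[OF R_subgroup] subgroup_Sym_id[OF subgroup_Hk] by metis
qed

lemma lifts_to_Hk_Y_quotient:
  assumes "\<gamma> \<in> Y" "\<delta> \<in> Y"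
  shows "lifts_to_Hk (\<gamma> \<circ> inv' \<delta>)"
proof -
  have \<gamma>: "\<gamma> \<in> R" "\<gamma> \<circ> \<sigma> \<circ> inv' \<gamma> \<in> Hk" and \<delta>: "\<delta> \<in> R" "\<delta> \<circ> \<sigma> \<circ> inv' \<delta> \<in> Hk"
    using assms Y_iff by auto
  have "inv' \<gamma> \<circ> \<delta> \<in> R" using \<gamma> \<delta> R_subgroup by (simp add: subgroup_Sym_comp subgroup_Sym_inv')
  moreover have "inv' (\<gamma> \<circ> \<sigma> \<circ> inv' \<gamma>) \<circ> (\<delta> \<circ> \<sigma> \<circ> inv' \<delta>) \<in> Hk"
    using \<gamma>(2) \<delta>(2) subgroup_Hk by (simp add: subgroup_Sym_comp subgroup_Sym_inv')
  ultimately show ?thesis unfolding lifts_to_Hk_def \<sigma>_conjugates_quotient[OF \<gamma>(1) \<delta>(1)] by blast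
qed

lemma lifts_to_Hk_comp:
  assumes ab: "a \<in> R" "b \<in> R" and lifts: "lifts_to_Hk a" "lifts_to_Hk b"
  shows "lifts_to_Hk (a \<circ> b)"
proof -
  obtain r1 where r1: "r1 \<in> R" "pullback (restrict_id r1 UM) \<circ> restrict_id a UM \<in> Hk"
    using lifts(1) by (auto simp: lifts_to_Hk_def)
  obtain r2 where r2: "r2 \<in> R" "pullback (restrict_id r2 UM) \<circ> restrict_id b UM \<in> Hk"
    using lifts(2) by (auto simp: lifts_to_Hk_def)
  have "restrict_id a UM permutes U"
    using R_restrict_UM_permutes[OF ab(1)] UM_subset_U by (rule permutes_subset)
  then have commute: "restrict_id a UM \<circ> pullback (restrict_id r2 UM) = pullback (restrict_id r2 UM) \<circ> restrict_id a UM"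
    using R_restrict_UM_permutes[OF r2(1)] by (rule permutes_U_commute_pullback)
  have "(pullback (restrict_id r1 UM) \<circ> restrict_id a UM) \<circ> (pullback (restrict_id r2 UM) \<circ> restrict_id b UM) \<in> Hk"
    using subgroup_Hk r1(2) r2(2) by (rule subgroup_Sym_comp)
  also have "(pullback (restrict_id r1 UM) \<circ> restrict_id a UM) \<circ> (pullback (restrict_id r2 UM) \<circ> restrict_id b UM)
      = pullback (restrict_id r1 UM \<circ> restrict_id r2 UM) \<circ> (restrict_id a UM \<circ> restrict_id b UM)"
    by (simp add: comp_assoc pullback_comp commute flip: comp_assoc[of "restrict_id a UM"])
  also have "restrict_id r1 UM \<circ> restrict_id r2 UM = restrict_id (r1 \<circ> r2) UM"
    using R_image_UM[OF r2(1)] by (simp add: restrict_id_comp)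
  also have "restrict_id a UM \<circ> restrict_id b UM = restrict_id (a \<circ> b) UM"
    using R_image_UM[OF ab(2)] by (simp add: restrict_id_comp)
  finally show ?thesis
    unfolding lifts_to_Hk_def using R_subgroup r1(1) r2(1) subgroup_Sym_comp by blast
qed

lemma D_lifts_to_Hk:
  assumes "d \<in> D"
  shows "lifts_to_Hk d"
  using assms[unfolded D_eq] D_generators_bij
proof (induction rule: generate_Sym_induct)
  case id
  show ?case by (rule lifts_to_Hk_id)
next
  case (gen s)
  then show ?case using lifts_to_Hk_Y_quotient by blast
next
  case (inv_gen s)
  then obtain \<gamma> \<delta> where \<gamma>\<delta>: "\<gamma> \<in> Y" "\<delta> \<in> Y" "s = \<gamma> \<circ> inv' \<delta>" by blast
  then have "inv' s = \<delta> \<circ> inv' \<gamma>" using Y_iff R_bij by (simp add: o_inv_distrib)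
  then show ?case using lifts_to_Hk_Y_quotient[OF \<gamma>\<delta>(2,1)] by (simp only:)
next
  case (comp a b)
  then show ?case using D_subset_R lifts_to_Hk_comp unfolding D_eq by blast
qed

lemma Hk_agrees_with_D_on_UM:
  assumes "d \<in> D"
  shows "\<exists>h\<in>Hk. \<forall>x\<in>UM. h x = d x"
proof -
  obtain r where r: "r \<in> R" "pullback (restrict_id r UM) \<circ> restrict_id d UM \<in> Hk"
    using D_lifts_to_Hk[OF assms] by (auto simp: lifts_to_Hk_def)
  have "pullback (restrict_id r UM) permutes inv' \<sigma> ` UM"
    using R_restrict_UM_permutes[OF r(1)] by (rule pullback_permutes)
  moreover have "d x \<in> UM" if "x \<in> UM" for x
    using that R_image_UM D_subset_R assms by blast
  moreover have "d x \<notin> inv' \<sigma> ` UM" if "d x \<in> UM" for x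
    using that inv_\<sigma>_image_UM_disjoint_U UM_subset_U by blast
  ultimately have "(pullback (restrict_id r UM) \<circ> restrict_id d UM) x = d x" if "x \<in> UM" for x
    using that by (simp add: permutes_not_in)
  then show ?thesis using r(2) by blast
qed

lemma D_conj_in_Hk:
  assumes "d \<in> D" "z \<in> Hk" "z permutes UM"
  shows "d \<circ> z \<circ> inv' d \<in> Hk"
proof -
  obtain h where h: "h \<in> Hk" "\<forall>x\<in>UM. h x = d x" using Hk_agrees_with_D_on_UM[OF assms(1)] by blast
  have d: "d \<in> R" using assms(1) D_subset_R by blast
  have "d \<circ> z \<circ> inv' d = h \<circ> z \<circ> inv' h"
    using R_bij[OF d] subgroup_Sym_bij[OF subgroup_Hk h(1)] R_image_UM[OF d] h(2) assms(3)
    by (intro conj_eq_if_agree) auto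
  then show ?thesis using subgroup_Sym_conj[OF subgroup_Hk h(1) assms(2)] by simp
qed

definition D_closure :: "('a \<Rightarrow> 'a) \<Rightarrow> ('a \<Rightarrow> 'a) set" where
  "D_closure z = generate Sym {d \<circ> z \<circ> inv' d | d. d \<in> D}"

lemma D_conjugates_in_Hk_Rist:
  assumes "\<tau> \<in> M" "z \<in> Hk" "z \<in> Rist G (Om \<tau>)" "d \<in> D"
  shows "d \<circ> z \<circ> inv' d \<in> Hk \<and> d \<circ> z \<circ> inv' d \<in> Rist G (Om \<tau>)"
proof -
  have d: "d \<in> R" using assms(4) D_subset_R by blast
  have z: "z permutes Om \<tau>" using assms(3) Rist_iff[OF subgroup_G] by blast
  have \<tau>: "\<tau> \<in> P" using assms(1) M_subset_P by blast
  have "d \<circ> z \<circ> inv' d \<in> Hk"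
    using assms(4,2) permutes_subset[OF z Om_subset_UM[OF assms(1)]] by (rule D_conj_in_Hk)
  moreover have "d \<circ> z \<circ> inv' d = restrict_id d (Om \<tau>) \<circ> z \<circ> inv' (restrict_id d (Om \<tau>))"
    using R_bij[OF d] R_image_Om[OF d \<tau>] z by (rule conj_restrict_id)
  then have "d \<circ> z \<circ> inv' d \<in> Rist G (Om \<tau>)"
    using subgroup_Sym_conj[OF subgroup_Rist[OF subgroup_G] R_restrict_Om[OF d \<tau>] assms(3)] by simp
  ultimately show ?thesis ..
qed

lemma D_closure_subgroup: "z \<in> Hk \<Longrightarrow> subgroup (D_closure z) Sym"
  unfolding D_closure_def using subgroup_Sym_bij[OF subgroup_Hk] R_bij D_subset_R
  by (intro subgroup_generate_Sym) auto

lemma D_closure_in_Hk_Rist: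
  assumes "\<tau> \<in> M" "z \<in> Hk" "z \<in> Rist G (Om \<tau>)"
  shows "D_closure z \<subseteq> Hk" and "D_closure z \<subseteq> Rist G (Om \<tau>)"
  unfolding D_closure_def using D_conjugates_in_Hk_Rist[OF assms]
  by (intro group.generate_subgroup_incl[OF group_BijGroup] subgroup_Hk subgroup_Rist[OF subgroup_G]; blast)+

lemma mem_D_closure: "z \<in> D_closure z"
proof -
  have "id \<circ> z \<circ> inv' id \<in> {d \<circ> z \<circ> inv' d | d. d \<in> D}" using subgroup_Sym_id[OF D_subgroup] by blast
  then show ?thesis unfolding D_closure_def by (simp add: generate.incl)
qed

lemma normalizes_D_closure:
  assumes "z \<in> Hk"
  shows "normalizes D (D_closure z)"
  unfolding normalizes_def
proof
  fix d assume d: "d \<in> D"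
  have zS: "z \<in> carrier Sym" using subgroup_Sym_bij[OF subgroup_Hk assms] by (simp add: Sym_carrier)
  have bij_D: "bij e" if "e \<in> D" for e using that D_subset_R R_bij by blast
  have "{e \<otimes>\<^bsub>Sym\<^esub> z \<otimes>\<^bsub>Sym\<^esub> inv\<^bsub>Sym\<^esub> e | e. e \<in> D} = {e \<circ> z \<circ> inv' e | e. e \<in> D}"
    using bij_D subgroup_Sym_bij[OF subgroup_Hk assms] by (metis (no_types, opaque_lifting) Sym_conj)
  then show "conjg d (D_closure z) = D_closure z"
    using group.generate_conjugates_normalized[OF group_BijGroup D_subgroup zS d]
    by (simp add: conjg_def D_closure_def)
qed

definition D_restrict :: "('a \<Rightarrow> 'a) \<Rightarrow> ('a \<Rightarrow> 'a) set" where
  "D_restrict \<tau> = (\<lambda>d. restrict_id d (Om \<tau>)) ` D"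

lemma D_restrict_subgroup: "\<tau> \<in> P \<Longrightarrow> subgroup (D_restrict \<tau>) Sym"
  unfolding D_restrict_def using D_subgroup R_image_Om D_subset_R
  by (intro subgroup_restrict_id_image) blast+

lemma D_restrict_subset_Rist: "\<tau> \<in> P \<Longrightarrow> D_restrict \<tau> \<subseteq> Rist G (Om \<tau>)"
  unfolding D_restrict_def using R_restrict_Om D_subset_R by blast

lemma D_Rist_subset_D_restrict: "D \<inter> Rist G (Om \<tau>) \<subseteq> D_restrict \<tau>"
proof
  fix d assume "d \<in> D \<inter> Rist G (Om \<tau>)"
  then have "d \<in> D" "restrict_id d (Om \<tau>) = d"
    using Rist_iff[OF subgroup_G] restrict_id_of_permutes by auto
  then show "d \<in> D_restrict \<tau>" unfolding D_restrict_def by (metis imageI)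
qed

lemma D_closure_subset:
  assumes \<tau>: "\<tau> \<in> P" and z: "z permutes Om \<tau>" "z \<in> L" and L: "subgroup L Sym"
    and stable: "\<And>W. W \<in> L \<Longrightarrow> W ` Om \<tau> = Om \<tau>"
    and restrictions: "D_restrict \<tau> \<subseteq> (\<lambda>g. restrict_id g (Om \<tau>)) ` L"
  shows "D_closure z \<subseteq> L"
proof -
  have "d \<circ> z \<circ> inv' d \<in> L" if d: "d \<in> D" for d
  proof -
    have dR: "d \<in> R" using d D_subset_R by blast
    have "restrict_id d (Om \<tau>) \<in> (\<lambda>g. restrict_id g (Om \<tau>)) ` L"
      using restrictions d by (auto simp: D_restrict_def)
    then obtain W where W: "W \<in> L" "restrict_id W (Om \<tau>) = restrict_id d (Om \<tau>)" by (metis imageE)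
    have "d \<circ> z \<circ> inv' d = W \<circ> z \<circ> inv' W"
    proof (rule conj_eq_if_agree)
      show "\<And>a. a \<in> Om \<tau> \<Longrightarrow> d a = W a"
        using W(2) by (metis restrict_id_simps(1))
    qed (use R_bij[OF dR] subgroup_Sym_bij[OF L W(1)] R_image_Om[OF dR \<tau>] z(1) in auto)
    then show ?thesis using subgroup_Sym_conj[OF L W(1) z(2)] by simp
  qed
  then show ?thesis unfolding D_closure_def
    by (intro group.generate_subgroup_incl[OF group_BijGroup _ L]) blast
qed

lemma D_restrict_lifts_to_Hk:
  assumes \<tau>: "\<tau> \<in> M" and y: "y \<in> D_restrict \<tau>"
  shows "\<exists>h\<in>Hk. h ` Om \<tau> = Om \<tau> \<and> restrict_id h (Om \<tau>) = y"
proof -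
  obtain d where d: "d \<in> D" "y = restrict_id d (Om \<tau>)" using y by (auto simp: D_restrict_def)
  obtain h where h: "h \<in> Hk" "\<forall>x\<in>UM. h x = d x" using Hk_agrees_with_D_on_UM[OF d(1)] by blast
  have agree: "\<forall>x\<in>Om \<tau>. h x = d x" using h(2) Om_subset_UM[OF \<tau>] by blast
  have "d ` Om \<tau> = Om \<tau>" using d(1) D_subset_R R_image_Om \<tau> M_subset_P by blast
  then have "h ` Om \<tau> = Om \<tau>" using agree by (simp cong: image_cong)
  moreover have "restrict_id h (Om \<tau>) = y" using agree d(2) by (auto simp: restrict_id_def)
  ultimately show ?thesis using h(1) by blast
qed

end

section \<open>The subgroups \<open>N\<close> and \<open>L\<close>\<close>

locale displacement_confined = displacement_subgroup +
  fixes m :: nat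
  assumes Rist_\<sigma>_nontrivial: "Rist G (Om \<sigma>) \<noteq> {\<one>\<^bsub>Sym\<^esub>}"
    and FC_trivial: "\<And>\<tau>. \<tau> \<in> P \<Longrightarrow> FC_le m (Rist G (Om \<tau>)) = {\<one>\<^bsub>Sym\<^esub>}"
    and index_D: "index_le D R m"
begin

lemma exists_noncommuting_in_D:
  assumes \<tau>: "\<tau> \<in> P" and w: "w \<in> Rist G (Om \<tau>)" "w \<noteq> id"
  shows "\<exists>d\<in>D. d \<in> Rist G (Om \<tau>) \<and> d \<circ> w \<noteq> w \<circ> d"
proof (rule ccontr)
  let ?F = "Rist G (Om \<tau>)"
  have F: "subgroup ?F Sym" by (rule subgroup_Rist[OF subgroup_G])
  assume "\<not> ?thesis"
  then have "d \<otimes>\<^bsub>Sym\<^esub> w = w \<otimes>\<^bsub>Sym\<^esub> d" if "d \<in> D" "d \<in> ?F" for d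
    using that subgroup_Sym_bij[OF F] w(1) by (auto simp: Sym_mult)
  then have "finite (conj_class ?F w) \<and> card (conj_class ?F w) \<le> card {D #>\<^bsub>Sym\<^esub> g | g. g \<in> R}"
    using group.card_conjugates_le_index[OF group_BijGroup F D_subgroup Rist_subset_R[OF \<tau>] w(1)]
      index_D by (simp add: conj_class_def index_le_def)
  then have "w \<in> FC_le m ?F" using w(1) index_D by (auto simp: FC_le_def index_le_def)
  then show False using FC_trivial[OF \<tau>] w(2) by (simp add: Sym_one)
qed

lemma nontrivial_commutator_in_Hk:
  assumes \<gamma>: "\<gamma> \<in> Y" and r: "r \<in> R" "restrict_id r UM \<noteq> id" and d: "d \<in> Rist G (Om \<sigma>)"
    and lifted: "pullback (restrict_id r UM) \<circ> d \<in> Hk"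
  shows "\<exists>\<tau>\<in>M. \<exists>z\<in>Hk. z \<in> Rist G (Om \<tau>) \<and> z \<noteq> id"
proof -
  have \<gamma>R: "\<gamma> \<in> R" and \<gamma>\<sigma>: "\<gamma> \<circ> \<sigma> \<circ> inv' \<gamma> \<in> Hk" using \<gamma> Y_iff by auto
  define w where "w = \<gamma> \<circ> restrict_id r UM \<circ> inv' \<gamma>"
  obtain \<tau> where \<tau>: "\<tau> \<in> M" and "restrict_id w (Om \<tau>) \<noteq> id"
    unfolding w_def using conj_restrict_UM_nontrivial_on_Om[OF \<gamma>R r] .
  define wt where "wt = restrict_id w (Om \<tau>)"
  have w: "w permutes UM" "w ` Om \<tau> = Om \<tau>"
    unfolding w_def using conj_restrict_UM_permutes[OF \<gamma>R r(1)] conj_restrict_UM_on_Om(1)[OF \<gamma>R r(1) \<tau>] .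
  have wt: "wt \<in> Rist G (Om \<tau>)" "wt \<noteq> id"
    unfolding wt_def w_def using conj_restrict_UM_on_Om(2)[OF \<gamma>R r(1) \<tau>] \<open>restrict_id w (Om \<tau>) \<noteq> id\<close>
    by (simp_all add: w_def)
  have \<tau>P: "\<tau> \<in> P" using \<tau> M_subset_P by blast
  obtain d' where d': "d' \<in> D" "d' \<in> Rist G (Om \<tau>)" "d' \<circ> wt \<noteq> wt \<circ> d'"
    using exists_noncommuting_in_D[OF \<tau>P wt] by blast
  have d'_perm: "d' permutes Om \<tau>" using d'(2) Rist_iff[OF subgroup_G] by blast
  have "restrict_id d' UM = d'"
    using permutes_subset[OF d'_perm Om_subset_UM[OF \<tau>]] by (rule restrict_id_of_permutes)
  then obtain r' where r': "r' \<in> R" "pullback (restrict_id r' UM) \<circ> d' \<in> Hk"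
    using D_lifts_to_Hk[OF d'(1)] by (auto simp: lifts_to_Hk_def)
  \<comment> \<open>Conjugating \<open>pullback (restrict_id r UM) \<circ> d\<close> by \<open>\<gamma>\<sigma>\<gamma>\<^sup>-\<^sup>1\<close> gives \<open>w \<circ> c\<close> with \<open>c\<close> supported
    on \<open>\<sigma> ` Om \<sigma>\<close>; in its commutator with the lift \<open>p \<circ> d'\<close> of \<open>d'\<close> only \<open>d'\<close> and \<open>w\<close> survive.\<close>
  define p where "p = pullback (restrict_id r' UM)"
  define c where "c = \<sigma> \<circ> (inv' \<gamma> \<circ> d \<circ> \<gamma>) \<circ> inv' \<sigma>"
  have "w \<circ> c \<in> Hk"
    using subgroup_Sym_conj[OF subgroup_Hk \<gamma>\<sigma> lifted] conj_pullback_decomp(1)[OF \<gamma>R r(1) d]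
    by (simp add: w_def c_def)
  with subgroup_Hk r'(2)[folded p_def]
  have "(p \<circ> d') \<circ> (w \<circ> c) \<circ> inv' (p \<circ> d') \<circ> inv' (w \<circ> c) \<in> Hk" by (rule subgroup_Sym_commutator)
  also have "(p \<circ> d') \<circ> (w \<circ> c) \<circ> inv' (p \<circ> d') \<circ> inv' (w \<circ> c) = d' \<circ> wt \<circ> inv' d' \<circ> inv' wt"
    unfolding p_def wt_def
    using \<tau> pullback_permutes[OF R_restrict_UM_permutes[OF r'(1)]] d'_perm w
      conj_pullback_decomp(2)[OF \<gamma>R r(1) d, folded c_def]
    by (rule commutator_of_lifts)
  finally have "d' \<circ> wt \<circ> inv' d' \<circ> inv' wt \<in> Hk" .
  moreover have "d' \<circ> wt \<circ> inv' d' \<circ> inv' wt \<in> Rist G (Om \<tau>)"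
    using subgroup_Rist[OF subgroup_G] d'(2) wt(1) by (rule subgroup_Sym_commutator)
  moreover have "d' \<circ> wt \<circ> inv' d' \<circ> inv' wt \<noteq> id"
    using d'(3) permutes_bij[OF d'_perm] subgroup_Sym_bij[OF subgroup_Rist[OF subgroup_G] wt(1)]
    by (simp add: commutator_eq_id_iff)
  ultimately show ?thesis using \<tau> by auto
qed

lemma exists_nontrivial_Rist_in_Hk: "\<exists>\<tau>\<in>M. \<exists>z\<in>Hk. z \<in> Rist G (Om \<tau>) \<and> z \<noteq> id"
proof -
  have F\<sigma>: "subgroup (Rist G (Om \<sigma>)) Sym" by (rule subgroup_Rist[OF subgroup_G])
  obtain w0 where w0: "w0 \<in> Rist G (Om \<sigma>)" "w0 \<noteq> id"
    using Rist_\<sigma>_nontrivial subgroup_Sym_id[OF F\<sigma>] by (auto simp: Sym_one)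
  obtain d where d: "d \<in> D" "d \<in> Rist G (Om \<sigma>)" "d \<circ> w0 \<noteq> w0 \<circ> d"
    using exists_noncommuting_in_D[OF \<sigma>_in_P w0] by blast
  have "d \<noteq> id" using d(3) by auto
  have "d permutes Om \<sigma>" using d(2) Rist_iff[OF subgroup_G] by blast
  then have "restrict_id d UM = d"
    using permutes_subset Om_subset_UM[OF \<sigma>_in_M] restrict_id_of_permutes by blast
  then obtain r where r: "r \<in> R" "pullback (restrict_id r UM) \<circ> d \<in> Hk"
    using D_lifts_to_Hk[OF d(1)] by (auto simp: lifts_to_Hk_def)
  show ?thesis
  proof (cases "restrict_id r UM = id")
    case True
    then have "d \<in> Hk" using r(2) by (simp add: pullback_id)
    then show ?thesis using \<sigma>_in_M d(2) \<open>d \<noteq> id\<close> by blast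
  next
    case False
    have "Y \<noteq> {}"
    proof
      assume "Y = {}"
      then have "D = generate Sym {}" by (simp add: D_eq)
      then have "D = {id}" using group.generate_empty[OF group_BijGroup, of UNIV] by (simp add: Sym_one)
      then show False using d(1) \<open>d \<noteq> id\<close> by blast
    qed
    then obtain \<gamma> where "\<gamma> \<in> Y" by blast
    then show ?thesis using r(1) False d(2) r(2) by (rule nontrivial_commutator_in_Hk)
  qed
qed

lemma finite_rcosets_D_restrict:
  assumes "\<tau> \<in> P"
  shows "finite {D_restrict \<tau> #>\<^bsub>Sym\<^esub> g | g. g \<in> Rist G (Om \<tau>)}"
  using index_D unfolding index_le_def
  by (intro group.finite_rcosets_if_contains_intersection[OF group_BijGroup D_subgroup
        D_restrict_subgroup[OF assms] subgroup_Rist[OF subgroup_G] Rist_subset_R[OF assms]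
        D_Rist_subset_D_restrict]) blast

lemma D_restrict_finitely_generated:
  assumes \<tau>: "\<tau> \<in> P" and fg: "fin_gen (Rist G (Om \<tau>))"
  obtains T where "finite T" "T \<subseteq> D_restrict \<tau>" "generate Sym T = D_restrict \<tau>"
proof -
  obtain S where S: "finite S" "S \<subseteq> carrier Sym" "generate Sym S = Rist G (Om \<tau>)"
    using fg by (auto simp: fin_gen_def)
  show ?thesis
    using group.finitely_generated_finite_index_subgroup[OF group_BijGroup S(1,2) D_restrict_subgroup[OF \<tau>]]
      D_restrict_subset_Rist[OF \<tau>] finite_rcosets_D_restrict[OF \<tau>] that
    by (auto simp: S(3))
qed

lemma D_closure_finitely_generated:
  assumes \<tau>: "\<tau> \<in> M" and z: "z \<in> Hk" "z \<in> Rist G (Om \<tau>)" and fg: "fin_gen (Rist G (Om \<tau>))"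
  shows "\<exists>L. subgroup L Sym \<and> fin_gen L \<and> D_closure z \<subseteq> L \<and> L \<subseteq> Hk"
proof -
  have \<tau>P: "\<tau> \<in> P" using \<tau> M_subset_P by blast
  let ?restr = "\<lambda>g. restrict_id g (Om \<tau>)"
  obtain T where T: "finite T" "T \<subseteq> D_restrict \<tau>" "generate Sym T = D_restrict \<tau>"
    using D_restrict_finitely_generated[OF \<tau>P fg] .
  obtain lift where lift: "\<forall>y\<in>T. lift y \<in> Hk \<and> lift y ` Om \<tau> = Om \<tau> \<and> ?restr (lift y) = y"
    using D_restrict_lifts_to_Hk[OF \<tau>] T(2) by (metis (no_types, lifting) subsetD)
  define L where "L = generate Sym (insert z (lift ` T))"
  have gens_Hk: "insert z (lift ` T) \<subseteq> Hk" using z(1) lift by blast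
  have L: "subgroup L Sym" unfolding L_def using gens_Hk subgroup_Sym_bij[OF subgroup_Hk]
    by (intro subgroup_generate_Sym) blast
  have "fin_gen L" unfolding fin_gen_def L_def
    using gens_Hk subgroup_Sym_bij[OF subgroup_Hk] T(1)
    by (intro exI[of _ "insert z (lift ` T)"]) (auto simp: Sym_carrier)
  moreover have "L \<subseteq> Hk"
    unfolding L_def using gens_Hk by (rule group.generate_subgroup_incl[OF group_BijGroup _ subgroup_Hk])
  moreover have "D_closure z \<subseteq> L"
  proof (rule D_closure_subset[OF \<tau>P _ _ L])
    show z_perm: "z permutes Om \<tau>" using z(2) Rist_iff[OF subgroup_G] by blast
    show "z \<in> L" unfolding L_def by (simp add: generate.incl)
    have "L \<subseteq> {g. bij g \<and> g ` Om \<tau> = Om \<tau>}"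
      unfolding L_def using gens_Hk subgroup_Sym_bij[OF subgroup_Hk] lift permutes_image[OF z_perm]
      by (intro group.generate_subgroup_incl[OF group_BijGroup _ subgroup_setwise_stabilizer]) auto
    then show L_stable: "\<And>W. W \<in> L \<Longrightarrow> W ` Om \<tau> = Om \<tau>" by blast
    have "T \<subseteq> ?restr ` L"
    proof
      fix y assume "y \<in> T"
      then have "lift y \<in> L" "?restr (lift y) = y" using lift by (auto simp: L_def intro: generate.incl)
      then show "y \<in> ?restr ` L" by (metis imageI)
    qed
    then show "D_restrict \<tau> \<subseteq> ?restr ` L"
      using subgroup_restrict_id_image[OF L L_stable]
      by (metis T(3) group.generate_subgroup_incl[OF group_BijGroup])
  qed
  ultimately show ?thesis using L by blast
qed

end

theorem proposition3p18:
  fixes n :: nat and H :: "nat \<Rightarrow> ('a \<Rightarrow> 'a) set" and G P :: "('a \<Rightarrow> 'a) set"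
    and Om :: "('a \<Rightarrow> 'a) \<Rightarrow> 'a set" and \<sigma> :: "'a \<Rightarrow> 'a" and k :: nat
  assumes "n \<ge> 1"
    and "\<And>j. j \<in> {1..n} \<Longrightarrow> subgroup (H j) Sym"
    and "subgroup G Sym"
    and "confined_by n H G"
    and "confining_subset n H G P"
    and "displacement_configuration P Om"
    and "\<And>\<tau>. \<tau> \<in> P \<Longrightarrow> Rist G (Om \<tau>) \<noteq> {\<one>\<^bsub>Sym\<^esub>}"
    and "\<And>\<tau>. \<tau> \<in> P \<Longrightarrow> FC_le (n * card P) (Rist G (Om \<tau>)) = {\<one>\<^bsub>Sym\<^esub>}"
    and "\<sigma> \<in> P" and "k \<in> {1..n}"
    and "index_le (Dgrp (Rgrp G P Om) \<sigma> (H k)) (Rgrp G P Om) (n * card P)"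
  shows "\<exists>\<rho> \<in> Mset P Om \<sigma>. \<exists>N. subgroup N Sym \<and> N \<subseteq> H k \<and> N \<noteq> {\<one>\<^bsub>Sym\<^esub>} \<and>
           N \<subseteq> Rist G (Om \<rho>) \<and> normalizes (Dgrp (Rgrp G P Om) \<sigma> (H k)) N \<and>
           ((\<forall>\<rho>' \<in> Mset P Om \<sigma>. fin_gen (Rist G (Om \<rho>'))) \<longrightarrow>
              (\<exists>L. subgroup L Sym \<and> fin_gen L \<and> N \<subseteq> L \<and> L \<subseteq> H k))"
proof -
  have "P \<subseteq> carrier Sym" using assms(5) by (simp add: confining_subset_def)
  moreover have "subgroup (H k) Sym" using assms(2,10) by blast
  ultimately interpret displacement_confined G P Om \<sigma> "H k" "n * card P"
    using assms(3,6,9) assms(7)[OF assms(9)] assms(8,11)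
    by (intro displacement_confined.intro displacement_subgroup.intro displacement.intro
        displacement_subgroup_axioms.intro displacement_confined_axioms.intro)
  obtain \<tau> z where \<tau>: "\<tau> \<in> Mset P Om \<sigma>" and z: "z \<in> H k" "z \<in> Rist G (Om \<tau>)" "z \<noteq> id"
    using exists_nontrivial_Rist_in_Hk by blast
  have "D_closure z \<noteq> {\<one>\<^bsub>Sym\<^esub>}" using mem_D_closure[of z] z(3) by (auto simp: Sym_one)
  then show ?thesis
    using \<tau> D_closure_subgroup[OF z(1)] D_closure_in_Hk_Rist[OF \<tau> z(1,2)] normalizes_D_closure[OF z(1)]
      D_closure_finitely_generated[OF \<tau> z(1,2)] by blast
qed

end
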